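(* There exists a universal constant $C<\infty$ such that the following holds. Let $(a_{ijk})_{i,j\le n,k\le m}$ be real numbers, $U\subset B_2^n$ and $S\subset\mathbb{R}^m$ nonempty bounded sets. Then for every $\varepsilon>0$, \[ N\Big(U\times S,d_A,8\varepsilon^2\mathbb{E}\beta_{A,S}(G_n) +2\varepsilon\sup_{x\in U}\beta_{A,S}(x)+8\varepsilon\sup_{t\in S}\mathbb{E}\alpha_A(G_n\otimes t)\Big) \leq \exp(C\varepsilon^{-2}), \] and for every $\delta>0$, \[ \sqrt{\log N(U\times S,d_A,\delta)}\leq C\Big(\delta^{-1}\big(\sup_{x\in U}\beta_{A,S}(x)+\sup_{t\in S}\mathbb{E}\alpha_A(G_n\otimes t)\big) +\delta^{-1/2}(\mathbb{E}\beta_{A,S}(G_n))^{1/2}\Big). \]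
   Context: $G_n$ is a standard Gaussian vector in $\mathbb{R}^n$, $g_1,\dots,g_n$ its coordinates; $B_2^n$ is the Euclidean unit ball. For $x\in\mathbb{R}^n,t\in\mathbb{R}^m$, $x\otimes t=(x_jt_k)_{j,k}\in\mathbb{R}^{nm}$; for $y\in\mathbb{R}^{nm}$, $\alpha_A(y)=\big(\sum_{i}(\sum_{j,k}a_{ijk}y_{jk})^2\big)^{1/2}$; $\beta_{A,S}(x)=\mathbb{E}\sup_{t\in S}|\sum_{i,j,k}a_{ijk}g_ix_jt_k|$. The (pseudo)metric is $d_A((x,t),(x',t'))=\alpha_A(x\otimes t-x'\otimes t')$. For a set $W$, metric $\rho$ and $\varepsilon>0$, $N(W,\rho,\varepsilon)$ is the smallest number of closed $\rho$-balls of diameter $\varepsilon$ covering $W$. *)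

theory Defs
  imports "HOL-Probability.Probability"
begin

text \<open>Vectors in R^n are functions nat => real whose relevant coordinates are those below n.
  Coefficients a_{ijk} are a function a :: nat => nat => nat => real, used for i,j < n, k < m.\<close>

definition gauss :: "nat \<Rightarrow> (nat \<Rightarrow> real) measure" where
  "gauss n = PiM {..<n} (\<lambda>_. density lborel std_normal_density)"

definition tensor :: "(nat \<Rightarrow> real) \<Rightarrow> (nat \<Rightarrow> real) \<Rightarrow> (nat \<Rightarrow> nat \<Rightarrow> real)" where
  "tensor x t = (\<lambda>j k. x j * t k)"

definition alphaA :: "(nat \<Rightarrow> nat \<Rightarrow> nat \<Rightarrow> real) \<Rightarrow> nat \<Rightarrow> nat \<Rightarrow> (nat \<Rightarrow> nat \<Rightarrow> real) \<Rightarrow> real" where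
  "alphaA a n m y = sqrt (\<Sum>i<n. (\<Sum>j<n. \<Sum>k<m. a i j k * y j k)\<^sup>2)"

definition betaAS :: "(nat \<Rightarrow> nat \<Rightarrow> nat \<Rightarrow> real) \<Rightarrow> nat \<Rightarrow> nat \<Rightarrow> (nat \<Rightarrow> real) set
    \<Rightarrow> (nat \<Rightarrow> real) \<Rightarrow> real" where
  "betaAS a n m S x = (\<integral>g. (SUP t\<in>S. \<bar>\<Sum>i<n. \<Sum>j<n. \<Sum>k<m. a i j k * g i * x j * t k\<bar>) \<partial>gauss n)"

definition dA :: "(nat \<Rightarrow> nat \<Rightarrow> nat \<Rightarrow> real) \<Rightarrow> nat \<Rightarrow> nat \<Rightarrow>
    (nat \<Rightarrow> real) \<times> (nat \<Rightarrow> real) \<Rightarrow> (nat \<Rightarrow> real) \<times> (nat \<Rightarrow> real) \<Rightarrow> real" where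
  "dA a n m p q = alphaA a n m (\<lambda>j k. tensor (fst p) (snd p) j k - tensor (fst q) (snd q) j k)"

text \<open>N(W,rho,eps): smallest number of closed rho-balls of diameter eps (i.e. radius eps/2)
  covering W; infinity if there is no finite cover.\<close>
definition covering_number :: "'a set \<Rightarrow> ('a \<Rightarrow> 'a \<Rightarrow> real) \<Rightarrow> real \<Rightarrow> enat" where
  "covering_number W \<rho> \<epsilon> =
     Inf {enat (card F) | F. finite F \<and> W \<subseteq> (\<Union>c\<in>F. {w. \<rho> c w \<le> \<epsilon> / 2})}"

definition unit_ball :: "nat \<Rightarrow> (nat \<Rightarrow> real) set" where
  "unit_ball n = {x. (\<forall>j\<ge>n. x j = 0) \<and> (\<Sum>j<n. (x j)\<^sup>2) \<le> 1}"

definition bounded_in :: "nat \<Rightarrow> (nat \<Rightarrow> real) set \<Rightarrow> bool" where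
  "bounded_in m S \<longleftrightarrow> (\<forall>t\<in>S. \<forall>k\<ge>m. t k = 0) \<and> (\<exists>R. \<forall>t\<in>S. (\<Sum>k<m. (t k)\<^sup>2) \<le> R)"

end

theory Submission
  imports Defs
begin

text \<open>
  Write \<open>G\<close> for the standard Gaussian vector and \<open>B(x,t)\<close> for the vector
  \<open>(\<Sum>\<^sub>j\<^sub>k a\<^sub>i\<^sub>j\<^sub>k x\<^sub>j t\<^sub>k)\<^sub>i\<close>, so that \<open>d\<^sub>A((x,t),(x',t')) = |B(x,t) - B(x',t')|\<close>.
  The only Gaussian tool is the shift inequality
  \<open>P(G + a \<in> W) \<ge> exp(-|a|\<^sup>2/2) P(W)\<close> for symmetric \<open>W\<close>; it yields
  \<open>|v| \<le> 6 E|\<langle>G,v\<rangle>|\<close> and, by a volumetric argument in Gaussian space, a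
  Sudakov-type bound for separated sets.

  Let \<open>P \<subseteq> U \<times> S\<close> be separated in \<open>d\<^sub>A\<close>. For each \<open>(x,t) \<in> P\<close> the event that
  \<open>G + x/\<epsilon>\<close> is typical (both \<open>|B(G + x/\<epsilon>, t)|\<close> and \<open>\<beta>(G + x/\<epsilon>)\<close> at most a constant
  times their means) has probability at least \<open>exp(-1/(2\<epsilon>\<^sup>2))/4\<close>. On this event
  \<open>B(x,t)\<close> lies within \<open>O(\<epsilon> sup\<^sub>t E|B(G,t)|)\<close> of \<open>-\<epsilon> B(G,t)\<close>, so for a fixed
  outcome \<open>g\<close> the points \<open>-\<epsilon> B(g,t)\<close> coming from pairs whose event occurs are still
  separated; they form a set controlled by the Gaussian process
  \<open>z \<mapsto> sup\<^sub>t |\<langle>z, B(g,t)\<rangle>|\<close>, whose mean is \<open>\<beta>(g)\<close>, and Sudakov bounds their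
  number by \<open>exp(O(\<epsilon>\<^sup>-\<^sup>2))\<close>. Integrating over \<open>g\<close> bounds \<open>|P|\<close>, and a maximal
  separated set is a covering. The second estimate follows by choosing \<open>\<epsilon>\<close> in
  terms of \<open>\<delta>\<close>.
\<close>

definition dotp :: "nat \<Rightarrow> (nat \<Rightarrow> real) \<Rightarrow> (nat \<Rightarrow> real) \<Rightarrow> real" where
  "dotp n z v = (\<Sum>i<n. z i * v i)"

definition l2norm :: "nat \<Rightarrow> (nat \<Rightarrow> real) \<Rightarrow> real" where
  "l2norm n v = sqrt (\<Sum>i<n. (v i)\<^sup>2)"

definition l1norm :: "nat \<Rightarrow> (nat \<Rightarrow> real) \<Rightarrow> real" where
  "l1norm n x = (\<Sum>j<n. \<bar>x j\<bar>)"

lemma l1norm_nonneg: "0 \<le> l1norm n x"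
  unfolding l1norm_def by (simp add: sum_nonneg)

lemma abs_le_l1norm: "i < n \<Longrightarrow> \<bar>x i\<bar> \<le> l1norm n x"
  unfolding l1norm_def by (rule member_le_sum) auto

lemma l2norm_nonneg: "0 \<le> l2norm n v"
  unfolding l2norm_def by (simp add: sum_nonneg)

lemma l2norm_le_l1norm: "l2norm n v \<le> l1norm n v"
  unfolding l2norm_def l1norm_def using L2_set_le_sum_abs[of v "{..<n}"] by (simp add: L2_set_def)

lemma l2norm_triangle: "l2norm n (\<lambda>i. u i + w i) \<le> l2norm n u + l2norm n w"
  unfolding l2norm_def using L2_set_triangle_ineq[of u w "{..<n}"] by (simp add: L2_set_def)

lemma l2norm_diff_triangle:
  "l2norm n (\<lambda>i. u i - w i) \<le> l2norm n (\<lambda>i. u i - v i) + l2norm n (\<lambda>i. v i - w i)"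
  using l2norm_triangle[of n "\<lambda>i. u i - v i" "\<lambda>i. v i - w i"] by simp

lemma l2norm_scale: "l2norm n (\<lambda>i. c * u i) = \<bar>c\<bar> * l2norm n u"
proof -
  have "(\<Sum>i<n. (c * u i)\<^sup>2) = c\<^sup>2 * (\<Sum>i<n. (u i)\<^sup>2)"
    by (simp add: power_mult_distrib sum_distrib_left)
  then show ?thesis unfolding l2norm_def by (simp add: real_sqrt_mult)
qed

lemma l2norm_uminus: "l2norm n (\<lambda>i. - u i) = l2norm n u"
  unfolding l2norm_def by simp

lemma l2norm_diff_commute: "l2norm n (\<lambda>i. u i - w i) = l2norm n (\<lambda>i. w i - u i)"
  unfolding l2norm_def by (simp add: power2_commute)

lemma power2_l2norm: "(l2norm n v)\<^sup>2 = (\<Sum>i<n. (v i)\<^sup>2)"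
  unfolding l2norm_def by (simp add: sum_nonneg)

lemma dotp_self: "dotp n v v = (l2norm n v)\<^sup>2"
  unfolding dotp_def power2_l2norm by (simp add: power2_eq_square)

lemma dotp_diff_left: "dotp n g v - dotp n g' v = dotp n (\<lambda>i. g i - g' i) v"
  unfolding dotp_def by (simp add: sum_subtractf left_diff_distrib)

lemma prob_space_std_normal: "prob_space (density lborel std_normal_density)"
  by (rule prob_space_normal_density) simp

lemma prob_space_gauss: "prob_space (gauss n)"
  unfolding gauss_def using prob_space_std_normal by (intro prob_space_PiM) auto

lemma space_gauss: "space (gauss n) = PiE {..<n} (\<lambda>_. UNIV)"
  unfolding gauss_def by (simp add: space_PiM)

lemma measurable_gauss_component_std_normal:
  "i < n \<Longrightarrow> (\<lambda>g. g i) \<in> measurable (gauss n) (density lborel std_normal_density)"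
  unfolding gauss_def by (rule measurable_component_singleton) simp

lemma measurable_gauss_component[measurable]: "i < n \<Longrightarrow> (\<lambda>g. g i) \<in> borel_measurable (gauss n)"
  using measurable_gauss_component_std_normal by (simp add: measurable_cong_sets[OF refl sets_density])

lemma integrable_abs_gauss_component: "i < n \<Longrightarrow> integrable (gauss n) (\<lambda>g. \<bar>g i\<bar>)"
proof -
  assume i: "i < n"
  have "integrable lborel (\<lambda>x. std_normal_density x * \<bar>x\<bar>^1)"
    by (rule integrable_std_normal_moment_abs)
  then have "integrable (density lborel std_normal_density) (\<lambda>x::real. \<bar>x\<bar>)"
    by (subst integrable_density) (auto simp: normal_density_nonneg)
  moreover have "distr (gauss n) (density lborel std_normal_density) (\<lambda>g. g i) = density lborel std_normal_density"
    unfolding gauss_def using i prob_space_std_normal by (intro distr_PiM_component) auto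
  ultimately have "integrable (distr (gauss n) (density lborel std_normal_density) (\<lambda>g. g i)) (\<lambda>x::real. \<bar>x\<bar>)"
    by simp
  then show ?thesis
    by (subst (asm) integrable_distr_eq[OF measurable_gauss_component_std_normal[OF i]]) auto
qed

lemma integrable_l1norm_gauss: "integrable (gauss n) (l1norm n)"
  unfolding l1norm_def by (rule Bochner_Integration.integrable_sum) (auto intro: integrable_abs_gauss_component)

lemma integrable_gauss_component: "i < n \<Longrightarrow> integrable (gauss n) (\<lambda>g. g i)"
  using integrable_abs_gauss_component[of i n] integrable_abs_iff[of "\<lambda>g. g i" "gauss n"] by simp

lemma integrable_gauss_linear: "integrable (gauss n) (\<lambda>g. dotp n g v)"
  unfolding dotp_def
  by (intro Bochner_Integration.integrable_sum integrable_mult_left integrable_gauss_component) auto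

lemma borel_measurable_gauss_linear[measurable]: "(\<lambda>g. dotp n g v) \<in> borel_measurable (gauss n)"
  unfolding dotp_def by measurable

lemma integrable_gauss_l1norm_bounded:
  assumes "f \<in> borel_measurable (gauss n)" "\<And>g. \<bar>f g\<bar> \<le> C * l1norm n g"
  shows "integrable (gauss n) f"
proof (rule Bochner_Integration.integrable_bound[OF _ assms(1)])
  show "integrable (gauss n) (\<lambda>g. C * l1norm n g)"
    using integrable_l1norm_gauss by (rule integrable_mult_right)
  show "AE g in gauss n. norm (f g) \<le> norm (C * l1norm n g)"
    using assms(2) by (intro AE_I2) (metis abs_ge_self order_trans real_norm_def)
qed

text \<open>Such an \<open>f\<close> depends only on the coordinates below \<open>n\<close>, so it factors through the
  extension by zero, which is measurable on \<open>gauss n\<close>.\<close>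
lemma lipschitz_imp_borel_measurable_gauss:
  fixes f :: "(nat \<Rightarrow> real) \<Rightarrow> real"
  assumes lip: "\<And>x y. \<bar>f x - f y\<bar> \<le> K * (\<Sum>i<n. \<bar>x i - y i\<bar>)"
  shows "f \<in> borel_measurable (gauss n)"
proof -
  have "isCont f y" for y
  proof -
    have c: "continuous_on UNIV (\<lambda>x. K * (\<Sum>i<n. \<bar>x i - y i\<bar>))"
      by (auto intro!: continuous_intros)
    then have "((\<lambda>x. K * (\<Sum>i<n. \<bar>x i - y i\<bar>)) \<longlongrightarrow> 0) (at y)"
      using continuous_on_def[THEN iffD1, OF c, rule_format, of y] by simp
    then have "((\<lambda>x. f x - f y) \<longlongrightarrow> 0) (at y)"
      by (rule Lim_null_comparison[rotated]) (simp add: lip)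
    then show ?thesis unfolding isCont_def by (simp add: LIM_zero_iff)
  qed
  then have fb: "f \<in> borel_measurable borel"
    by (intro borel_measurable_continuous_onI continuous_at_imp_continuous_on) auto
  define ext0 where "ext0 = (\<lambda>x i. if i < n then x i else 0 :: real)"
  have "ext0 \<in> borel_measurable (gauss n)"
  proof (rule measurable_coordinatewise_then_product)
    show "(\<lambda>x. ext0 x i) \<in> borel_measurable (gauss n)" for i
      by (cases "i < n") (simp_all add: ext0_def)
  qed
  from measurable_comp[OF this fb] have "(\<lambda>x. f (ext0 x)) \<in> borel_measurable (gauss n)"
    by (simp add: comp_def)
  moreover have "f (ext0 x) = f x" for x
    using lip[of "ext0 x" x] by (simp add: ext0_def)
  ultimately show ?thesis by simp
qed

section \<open>Translations of the Gaussian measure\<close>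

definition translate :: "nat \<Rightarrow> (nat \<Rightarrow> real) \<Rightarrow> (nat \<Rightarrow> real) \<Rightarrow> (nat \<Rightarrow> real)" where
  "translate n a g = (\<lambda>i\<in>{..<n}. g i + a i)"

definition reflect :: "nat \<Rightarrow> (nat \<Rightarrow> real) \<Rightarrow> (nat \<Rightarrow> real)" where
  "reflect n g = (\<lambda>i\<in>{..<n}. - g i)"

definition cm_density :: "nat \<Rightarrow> (nat \<Rightarrow> real) \<Rightarrow> (nat \<Rightarrow> real) \<Rightarrow> real" where
  "cm_density n a y = (\<Prod>i<n. exp (y i * a i - (a i)\<^sup>2 / 2))"

lemma translate_measurable[measurable]: "translate n a \<in> measurable (gauss n) (gauss n)"
  unfolding translate_def by (subst (2) gauss_def, rule measurable_restrict) (simp add: measurable_cong_sets[OF refl sets_density])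

lemma reflect_measurable[measurable]: "reflect n \<in> measurable (gauss n) (gauss n)"
  unfolding reflect_def by (subst (2) gauss_def, rule measurable_restrict) (simp add: measurable_cong_sets[OF refl sets_density])

lemma translate_in_space: "translate n a g \<in> space (gauss n)"
  by (simp add: space_gauss translate_def)

lemma reflect_in_space: "reflect n g \<in> space (gauss n)"
  by (simp add: space_gauss reflect_def)

lemma dotp_translate: "dotp n (translate n a z) v = dotp n z v + dotp n a v"
  unfolding dotp_def translate_def by (simp add: sum.distrib[symmetric] distrib_right)

lemma dotp_reflect: "dotp n (reflect n z) v = - dotp n z v"
  unfolding dotp_def reflect_def by (simp add: sum_negf[symmetric])

lemma emeasure_std_normal_translate:
  assumes A: "A \<in> sets borel"
  shows "emeasure (density lborel std_normal_density) ((\<lambda>y. y + c) -` A)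
       = emeasure (density lborel (normal_density c 1)) A"
proof -
  have "(\<lambda>y::real. y + c) \<in> borel_measurable borel" by simp
  from measurable_sets_borel[OF this A] have pre: "(\<lambda>y. y + c) -` A \<in> sets borel" .
  have "emeasure (density lborel std_normal_density) ((\<lambda>y. y + c) -` A)
      = (\<integral>\<^sup>+ y. ennreal (normal_density c 1 (c + y)) * indicator A (c + y) \<partial>lborel)"
    using pre by (subst emeasure_density)
      (auto intro!: nn_integral_cong simp: normal_density_def indicator_def add.commute)
  also have "\<dots> = (\<integral>\<^sup>+ z. ennreal (normal_density c 1 z) * indicator A z \<partial>(distr lborel borel ((+) c)))"
    using A by (subst nn_integral_distr) auto
  also have "\<dots> = emeasure (density lborel (normal_density c 1)) A"
    using A by (simp add: lborel_distr_plus emeasure_density)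
  finally show ?thesis .
qed

lemma std_normal_density_mult_exp:
  "std_normal_density x * exp (x * c - c\<^sup>2 / 2) = normal_density c 1 x"
proof -
  have "exp (- x\<^sup>2 / 2) * exp (x * c - c\<^sup>2 / 2) = exp (- (x - c)\<^sup>2 / 2)"
    by (subst exp_add[symmetric]) (simp add: power2_eq_square algebra_simps)
  then show ?thesis unfolding normal_density_def by simp
qed

lemma nn_integral_std_normal_exp_tilt:
  assumes A: "A \<in> sets borel"
  shows "(\<integral>\<^sup>+ x. ennreal (exp (x * c - c\<^sup>2 / 2)) * indicator A x \<partial>density lborel std_normal_density)
       = emeasure (density lborel (normal_density c 1)) A"
proof -
  have "(\<integral>\<^sup>+ x. ennreal (exp (x * c - c\<^sup>2 / 2)) * indicator A x \<partial>density lborel std_normal_density)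
      = (\<integral>\<^sup>+ x. ennreal (std_normal_density x) * (ennreal (exp (x * c - c\<^sup>2 / 2)) * indicator A x) \<partial>lborel)"
    using A by (subst nn_integral_density) auto
  also have "\<dots> = (\<integral>\<^sup>+ x. ennreal (normal_density c 1 x) * indicator A x \<partial>lborel)"
    by (intro nn_integral_cong)
      (simp add: ennreal_mult[symmetric] normal_density_nonneg mult.assoc[symmetric] std_normal_density_mult_exp)
  also have "\<dots> = emeasure (density lborel (normal_density c 1)) A"
    using A by (subst emeasure_density) auto
  finally show ?thesis .
qed

context
  fixes n :: nat and a :: "nat \<Rightarrow> real"
begin

definition shifted_gauss :: "(nat \<Rightarrow> real) measure" where
  "shifted_gauss = PiM {..<n} (\<lambda>i. density lborel (normal_density (a i) 1))"

interpretation shifted: product_sigma_finite "\<lambda>i. density lborel (normal_density (a i) 1)"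
  unfolding product_sigma_finite_def
  using prob_space_imp_sigma_finite[OF prob_space_normal_density] by auto

interpretation std: product_sigma_finite "\<lambda>_::nat. density lborel std_normal_density"
  unfolding product_sigma_finite_def
  using prob_space_imp_sigma_finite[OF prob_space_std_normal] by auto

lemma sets_shifted_gauss: "sets shifted_gauss = sets (gauss n)"
  unfolding gauss_def shifted_gauss_def by (intro sets_PiM_cong) auto

lemma distr_translate_gauss_eq_shifted: "distr (gauss n) (gauss n) (translate n a) = shifted_gauss"
  unfolding shifted_gauss_def
proof (rule shifted.PiM_eqI)
  fix A assume "\<And>i. i \<in> {..<n} \<Longrightarrow> A i \<in> sets (density lborel (normal_density (a i) 1))"
  then have A_borel: "\<And>i. i < n \<Longrightarrow> A i \<in> sets borel" by auto
  have "(\<lambda>y::real. y + c) \<in> borel_measurable borel" for c by simp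
  from measurable_sets_borel[OF this A_borel]
  have pre_borel: "\<And>i. i < n \<Longrightarrow> (\<lambda>y. y + a i) -` A i \<in> sets borel" .
  have pre: "translate n a -` PiE {..<n} A \<inter> space (gauss n) = PiE {..<n} (\<lambda>i. (\<lambda>y. y + a i) -` A i)"
    by (auto simp: translate_def space_gauss PiE_iff extensional_def)
  have "emeasure (distr (gauss n) (gauss n) (translate n a)) (PiE {..<n} A)
      = emeasure (gauss n) (PiE {..<n} (\<lambda>i. (\<lambda>y. y + a i) -` A i))"
    using A_borel sets_shifted_gauss unfolding pre[symmetric] shifted_gauss_def
    by (intro emeasure_distr) (auto intro: sets_PiM_I_finite)
  also have "\<dots> = (\<Prod>i<n. emeasure (density lborel std_normal_density) ((\<lambda>y. y + a i) -` A i))"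
    unfolding gauss_def using pre_borel by (subst std.emeasure_PiM) auto
  also have "\<dots> = (\<Prod>i<n. emeasure (density lborel (normal_density (a i) 1)) (A i))"
    using A_borel by (intro prod.cong) (auto simp: emeasure_std_normal_translate)
  finally show "emeasure (distr (gauss n) (gauss n) (translate n a)) (PiE {..<n} A)
      = (\<Prod>i\<in>{..<n}. emeasure (density lborel (normal_density (a i) 1)) (A i))" by simp
qed (use sets_shifted_gauss in \<open>auto simp: shifted_gauss_def\<close>)

lemma density_cm_density_eq_shifted: "density (gauss n) (\<lambda>y. ennreal (cm_density n a y)) = shifted_gauss"
  unfolding shifted_gauss_def
proof (rule shifted.PiM_eqI)
  fix A assume "\<And>i. i \<in> {..<n} \<Longrightarrow> A i \<in> sets (density lborel (normal_density (a i) 1))"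
  then have A_borel[measurable]: "\<And>i. i < n \<Longrightarrow> A i \<in> sets borel" by auto
  have PA: "PiE {..<n} A \<in> sets (gauss n)"
    unfolding gauss_def by (intro sets_PiM_I_finite) auto
  have "emeasure (density (gauss n) (\<lambda>y. ennreal (cm_density n a y))) (PiE {..<n} A)
      = (\<integral>\<^sup>+ y. ennreal (cm_density n a y) * indicator (PiE {..<n} A) y \<partial>gauss n)"
    using PA by (subst emeasure_density) (auto simp: cm_density_def)
  also have "\<dots> = (\<integral>\<^sup>+ y. (\<Prod>i<n. ennreal (exp (y i * a i - (a i)\<^sup>2 / 2)) * indicator (A i) (y i)) \<partial>gauss n)"
  proof (intro nn_integral_cong)
    fix y assume "y \<in> space (gauss n)"
    then have "indicator (PiE {..<n} A) y = (\<Prod>i<n. indicator (A i) (y i) :: ennreal)"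
      by (auto simp: space_gauss indicator_def PiE_iff prod_zero_iff extensional_def)
    then show "ennreal (cm_density n a y) * indicator (PiE {..<n} A) y
        = (\<Prod>i<n. ennreal (exp (y i * a i - (a i)\<^sup>2 / 2)) * indicator (A i) (y i))"
      unfolding cm_density_def prod.distrib by (simp add: prod_ennreal)
  qed
  also have "\<dots> = (\<Prod>i<n. \<integral>\<^sup>+ x. ennreal (exp (x * a i - (a i)\<^sup>2 / 2)) * indicator (A i) x
                    \<partial>density lborel std_normal_density)"
    unfolding gauss_def by (intro std.product_nn_integral_prod) auto
  also have "\<dots> = (\<Prod>i<n. emeasure (density lborel (normal_density (a i) 1)) (A i))"
    by (intro prod.cong refl nn_integral_std_normal_exp_tilt) auto
  finally show "emeasure (density (gauss n) (\<lambda>y. ennreal (cm_density n a y))) (PiE {..<n} A)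
      = (\<Prod>i\<in>{..<n}. emeasure (density lborel (normal_density (a i) 1)) (A i))" by simp
qed (use sets_shifted_gauss in \<open>auto simp: shifted_gauss_def\<close>)

end

theorem distr_translate_gauss:
  "distr (gauss n) (gauss n) (translate n a) = density (gauss n) (\<lambda>y. ennreal (cm_density n a y))"
  by (simp add: distr_translate_gauss_eq_shifted density_cm_density_eq_shifted)

lemma distr_uminus_std_normal:
  "distr (density lborel std_normal_density) (density lborel std_normal_density) uminus
   = density lborel std_normal_density"
proof (rule measure_eqI)
  fix A assume "A \<in> sets (distr (density lborel std_normal_density) (density lborel std_normal_density) uminus)"
  then have A[measurable]: "A \<in> sets borel" by simp
  have "(\<lambda>y::real. - y) \<in> borel_measurable borel" by simp
  from measurable_sets_borel[OF this A] have pre: "uminus -` A \<in> sets borel" .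
  have "emeasure (distr (density lborel std_normal_density) (density lborel std_normal_density) uminus) A
      = (\<integral>\<^sup>+ y. ennreal (std_normal_density y) * indicator (uminus -` A) y \<partial>lborel)"
    using pre by (simp add: emeasure_distr emeasure_density)
  also have "\<dots> = (\<integral>\<^sup>+ y. ennreal (std_normal_density (- y)) * indicator A (- y) \<partial>lborel)"
    by (intro nn_integral_cong) (simp add: normal_density_def indicator_def)
  also have "\<dots> = (\<integral>\<^sup>+ z. ennreal (std_normal_density z) * indicator A z \<partial>(distr lborel borel uminus))"
    by (subst nn_integral_distr) auto
  also have "\<dots> = emeasure (density lborel std_normal_density) A"
    by (simp add: lborel_distr_uminus emeasure_density)
  finally show "emeasure (distr (density lborel std_normal_density) (density lborel std_normal_density) uminus) A
      = emeasure (density lborel std_normal_density) A" .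
qed simp

lemma distr_reflect_gauss: "distr (gauss n) (gauss n) (reflect n) = gauss n"
proof -
  have "compose {..<n} uminus = reflect n"
    by (auto simp: compose_def reflect_def fun_eq_iff)
  moreover have "distr (gauss n) (gauss n) (compose {..<n} uminus)
      = PiM {..<n} (\<lambda>i. distr (density lborel std_normal_density) (density lborel std_normal_density) uminus)"
    unfolding gauss_def using prob_space_std_normal by (intro distr_PiM_finite_prob_space') auto
  ultimately show ?thesis by (simp add: distr_uminus_std_normal gauss_def)
qed

lemma two_exp_le_cm_density_reflect:
  "2 * exp (- (\<Sum>i<n. (a i)\<^sup>2) / 2) \<le> cm_density n a y + cm_density n a (reflect n y)"
proof -
  define s where "s = (\<Sum>i<n. y i * a i)"
  define q where "q = (\<Sum>i<n. (a i)\<^sup>2) / 2"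
  have eq: "cm_density n a y = exp (s - q)"
    unfolding cm_density_def s_def q_def by (simp add: exp_sum[symmetric] sum_subtractf sum_divide_distrib)
  have "(\<Sum>i<n. reflect n y i * a i) = - s"
    unfolding s_def reflect_def by (simp add: sum_negf[symmetric])
  then have "cm_density n a (reflect n y) = exp (- s - q)"
    unfolding cm_density_def q_def by (simp add: exp_sum[symmetric] sum_subtractf sum_divide_distrib)
  moreover have "2 \<le> exp s + exp (- s)"
    using exp_ge_add_one_self[of s] exp_ge_add_one_self[of "-s"] by linarith
  then have "2 * exp (- q) \<le> (exp s + exp (- s)) * exp (- q)" by simp
  ultimately have "2 * exp (- q) \<le> cm_density n a y + cm_density n a (reflect n y)"
    unfolding eq by (simp add: distrib_right exp_add[symmetric])
  then show ?thesis by (simp add: q_def)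
qed

text \<open>Averaging the Cameron--Martin density over \<open>y\<close> and \<open>-y\<close> replaces it by
  \<open>cosh \<langle>y,a\<rangle> exp(-|a|\<^sup>2/2) \<ge> exp(-|a|\<^sup>2/2)\<close>; symmetry of \<open>W\<close> makes the average legitimate.\<close>
theorem measure_translate_symmetric_ge:
  assumes W[measurable]: "W \<in> sets (gauss n)"
    and sym: "\<And>g. g \<in> space (gauss n) \<Longrightarrow> reflect n g \<in> W \<longleftrightarrow> g \<in> W"
  shows "measure (gauss n) {g \<in> space (gauss n). translate n a g \<in> W}
         \<ge> exp (- (\<Sum>i<n. (a i)\<^sup>2) / 2) * measure (gauss n) W"
proof -
  interpret prob_space "gauss n" by (rule prob_space_gauss)
  define c where "c = exp (- (\<Sum>i<n. (a i)\<^sup>2) / 2)"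
  define I where "I = (\<integral>\<^sup>+ y. ennreal (cm_density n a y) * indicator W y \<partial>gauss n)"
  have [measurable]: "cm_density n a \<in> borel_measurable (gauss n)"
    unfolding cm_density_def by measurable
  have cm_nonneg: "0 \<le> cm_density n a y" for y
    unfolding cm_density_def by (simp add: prod_nonneg)
  have translate_eq: "emeasure (gauss n) {g \<in> space (gauss n). translate n a g \<in> W} = I"
  proof -
    have "{g \<in> space (gauss n). translate n a g \<in> W} = translate n a -` W \<inter> space (gauss n)" by auto
    then have "emeasure (gauss n) {g \<in> space (gauss n). translate n a g \<in> W}
        = emeasure (distr (gauss n) (gauss n) (translate n a)) W"
      by (simp add: emeasure_distr)
    then show ?thesis
      unfolding I_def distr_translate_gauss by (simp add: emeasure_density)
  qed
  have reflect_eq: "(\<integral>\<^sup>+ y. ennreal (cm_density n a (reflect n y)) * indicator W y \<partial>gauss n) = I"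
  proof -
    have "(\<integral>\<^sup>+ y. ennreal (cm_density n a (reflect n y)) * indicator W y \<partial>gauss n)
        = (\<integral>\<^sup>+ y. ennreal (cm_density n a y) * indicator W y \<partial>distr (gauss n) (gauss n) (reflect n))"
      by (subst nn_integral_distr) (auto intro!: nn_integral_cong simp: indicator_def sym)
    then show ?thesis unfolding I_def distr_reflect_gauss .
  qed
  have "ennreal (2 * c) * emeasure (gauss n) W = (\<integral>\<^sup>+ y. ennreal (2 * c) * indicator W y \<partial>gauss n)"
    by (simp add: nn_integral_cmult_indicator)
  also have "\<dots> \<le> (\<integral>\<^sup>+ y. ennreal (cm_density n a y) * indicator W y
                        + ennreal (cm_density n a (reflect n y)) * indicator W y \<partial>gauss n)"
    using two_exp_le_cm_density_reflect[where n=n and a=a] cm_nonneg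
    by (intro nn_integral_mono) (auto simp: indicator_def c_def ennreal_plus[symmetric] simp del: ennreal_plus)
  also have "\<dots> = 2 * I"
    by (subst nn_integral_add) (auto simp: reflect_eq I_def mult_2)
  finally have "2 * (ennreal c * emeasure (gauss n) W) \<le> 2 * I"
    unfolding c_def by (simp add: ennreal_mult mult.assoc)
  then have "ennreal (c * measure (gauss n) W) \<le> ennreal (measure (gauss n) {g \<in> space (gauss n). translate n a g \<in> W})"
    by (simp add: ennreal_mult_le_mult_iff emeasure_eq_measure ennreal_mult translate_eq[symmetric] c_def)
  then show ?thesis by (simp add: c_def)
qed

lemma measure_gt_Markov:
  assumes "prob_space M" and f[measurable]: "f \<in> borel_measurable M" and fi: "integrable M f"
    and nn: "\<And>x. x \<in> space M \<Longrightarrow> 0 \<le> f x" and b: "(\<integral>x. f x \<partial>M) \<le> b" and k: "0 < \<kappa>"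
  shows "measure M {x\<in>space M. f x > \<kappa> * b} \<le> 1 / \<kappa>"
proof -
  interpret prob_space M by fact
  have I0: "0 \<le> (\<integral>x. f x \<partial>M)" using nn by (intro Bochner_Integration.integral_nonneg) auto
  show ?thesis
  proof (cases "b > 0")
    case True
    have "measure M {x\<in>space M. f x > \<kappa> * b} \<le> measure M {x\<in>space M. f x \<ge> \<kappa> * b}"
      by (intro finite_measure_mono) auto
    also have "\<dots> \<le> (\<integral>x. f x \<partial>M) / (\<kappa> * b)"
      using True k nn by (intro integral_Markov_inequality_measure[OF fi]) auto
    also have "\<dots> \<le> b / (\<kappa> * b)"
      using True k b by (intro divide_right_mono) auto
    also have "\<dots> = 1 / \<kappa>" using True by simp
    finally show ?thesis .
  next
    case False
    then have "b = 0" and "(\<integral>x. f x \<partial>M) = 0" using I0 b by linarith+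
    then have "AE x in M. f x = 0"
      using integral_nonneg_eq_0_iff_AE[OF fi] nn by auto
    then have "emeasure M {x\<in>space M. f x > \<kappa> * b} = 0"
      using \<open>b = 0\<close> by (intro emeasure_eq_0_AE) auto
    then have "measure M {x\<in>space M. f x > \<kappa> * b} = 0"
      by (simp add: measure_def)
    then show ?thesis using k by simp
  qed
qed

lemma measure_le_Markov:
  assumes "prob_space M" and f: "f \<in> borel_measurable M" and fi: "integrable M f"
    and nn: "\<And>x. x \<in> space M \<Longrightarrow> 0 \<le> f x" and b: "(\<integral>x. f x \<partial>M) \<le> b" and k: "0 < \<kappa>"
  shows "measure M {x\<in>space M. f x \<le> \<kappa> * b} \<ge> 1 - 1 / \<kappa>"
proof -
  interpret prob_space M by fact
  have "{x\<in>space M. f x \<le> \<kappa> * b} = space M - {x\<in>space M. f x > \<kappa> * b}" by auto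
  moreover have "{x\<in>space M. f x > \<kappa> * b} \<in> sets M" using f by measurable
  ultimately show ?thesis
    using measure_gt_Markov[OF assms] by (simp add: prob_compl)
qed

lemma measure_conj_ge:
  fixes f1 f2 :: "'a \<Rightarrow> real"
  assumes "prob_space M" and [measurable]: "f1 \<in> borel_measurable M" "f2 \<in> borel_measurable M"
  shows "measure M {x\<in>space M. f1 x \<le> c1 \<and> f2 x \<le> c2}
         \<ge> 1 - measure M {x\<in>space M. f1 x > c1} - measure M {x\<in>space M. f2 x > c2}"
proof -
  interpret prob_space M by fact
  have eq: "{x\<in>space M. f1 x \<le> c1 \<and> f2 x \<le> c2} = space M - ({x\<in>space M. f1 x > c1} \<union> {x\<in>space M. f2 x > c2})"
    by auto
  have "measure M ({x\<in>space M. f1 x > c1} \<union> {x\<in>space M. f2 x > c2})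
      \<le> measure M {x\<in>space M. f1 x > c1} + measure M {x\<in>space M. f2 x > c2}"
    by (intro measure_Un_le) auto
  then show ?thesis unfolding eq by (subst prob_compl) auto
qed

lemma measure_mult_le_integral:
  assumes "prob_space M" and E[measurable]: "E \<in> sets M" and fi: "integrable M f"
    and nn: "\<And>x. x \<in> space M \<Longrightarrow> 0 \<le> f x" and onE: "\<And>x. x \<in> E \<Longrightarrow> c \<le> f x"
  shows "c * measure M E \<le> (\<integral>x. f x \<partial>M)"
proof -
  interpret prob_space M by fact
  have "c * measure M E = (\<integral>x. c * indicator E x \<partial>M)"
    using E by (simp add: Int_absorb2 sets.sets_into_space)
  also have "\<dots> \<le> (\<integral>x. f x \<partial>M)"
  proof (rule integral_mono[OF _ fi])
    show "integrable M (\<lambda>x. c * indicator E x)"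
      using E by (intro integrable_mult_right integrable_real_indicator) (auto simp: emeasure_eq_measure)
  qed (use nn onE in \<open>auto simp: indicator_def\<close>)
  finally show ?thesis .
qed

section \<open>The first absolute moment of a Gaussian linear form\<close>

text \<open>The constant is far from \<open>\<surd>(\<pi>/2)\<close>, but the proof needs only the shift inequality:
  the symmetric event \<open>|\<langle>G,v\<rangle>| \<le> 2 E|\<langle>G,v\<rangle>|\<close> has probability at least 1/2, and its
  translate by \<open>-v/|v|\<close> has probability at least 1/4 and forces \<open>|\<langle>G,v\<rangle>|\<close> to be large.\<close>
theorem l2norm_le_expectation_abs_dotp: "l2norm n v \<le> 6 * (\<integral>g. \<bar>dotp n g v\<bar> \<partial>gauss n)"
proof -
  interpret prob_space "gauss n" by (rule prob_space_gauss)
  define m where "m = (\<integral>g. \<bar>dotp n g v\<bar> \<partial>gauss n)"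
  have m0: "0 \<le> m" unfolding m_def by (intro Bochner_Integration.integral_nonneg) auto
  show ?thesis
  proof (cases "l2norm n v \<le> 2 * m")
    case True then show ?thesis using m0 unfolding m_def by linarith
  next
    case False
    then have nv: "l2norm n v > 0" using m0 by linarith
    define K where "K = {g\<in>space (gauss n). \<bar>dotp n g v\<bar> \<le> 2 * m}"
    have K[measurable]: "K \<in> sets (gauss n)" unfolding K_def by measurable
    have PK: "measure (gauss n) K \<ge> 1/2"
      using measure_le_Markov[OF prob_space_gauss _ integrable_abs[OF integrable_gauss_linear], where b=m and \<kappa>=2]
      unfolding K_def m_def by auto
    have symK: "reflect n g \<in> K \<longleftrightarrow> g \<in> K" if "g \<in> space (gauss n)" for g
      using that reflect_in_space unfolding K_def by (auto simp: dotp_reflect)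
    define a where "a = (\<lambda>i. - v i / l2norm n v)"
    have a_unit: "(\<Sum>i<n. (a i)\<^sup>2) = 1"
      using nv unfolding a_def by (simp add: power_divide sum_divide_distrib[symmetric] power2_l2norm[symmetric])
    have dotp_a: "dotp n a v = - l2norm n v"
    proof -
      have "dotp n a v = - dotp n v v / l2norm n v"
        unfolding dotp_def a_def by (simp add: sum_divide_distrib[symmetric] sum_negf mult.commute)
      then show ?thesis using nv by (simp add: dotp_self power2_eq_square)
    qed
    define E where "E = {g\<in>space (gauss n). translate n a g \<in> K}"
    have E[measurable]: "E \<in> sets (gauss n)" unfolding E_def by measurable
    have "1/2 * (1/2) \<le> exp (- (\<Sum>i<n. (a i)\<^sup>2) / 2) * measure (gauss n) K"
      using exp_ge_add_one_self[of "- (1/2::real)"] PK unfolding a_unit by (intro mult_mono) auto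
    also have "\<dots> \<le> measure (gauss n) E"
      unfolding E_def by (rule measure_translate_symmetric_ge[OF K symK])
    finally have PE: "1/4 \<le> measure (gauss n) E" by simp
    have onE: "l2norm n v - 2 * m \<le> \<bar>dotp n g v\<bar>" if "g \<in> E" for g
    proof -
      from that have "\<bar>dotp n (translate n a g) v\<bar> \<le> 2 * m" unfolding E_def K_def by auto
      then show ?thesis by (simp add: dotp_translate dotp_a)
    qed
    have "(l2norm n v - 2 * m) * (1/4) \<le> (l2norm n v - 2 * m) * measure (gauss n) E"
      using PE False by (intro mult_left_mono) auto
    also have "\<dots> \<le> (\<integral>g. \<bar>dotp n g v\<bar> \<partial>gauss n)"
      using onE by (intro measure_mult_le_integral[OF prob_space_gauss E integrable_abs[OF integrable_gauss_linear]]) auto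
    finally show ?thesis unfolding m_def[symmetric] by simp
  qed
qed

section \<open>Separated sets and a Sudakov-type inequality\<close>

definition separated :: "('a \<Rightarrow> 'a \<Rightarrow> real) \<Rightarrow> real \<Rightarrow> 'a set \<Rightarrow> bool" where
  "separated d r P \<longleftrightarrow> (\<forall>p\<in>P. \<forall>p'\<in>P. p \<noteq> p' \<longrightarrow> r < d p p')"

abbreviation l2dist :: "nat \<Rightarrow> (nat \<Rightarrow> real) \<Rightarrow> (nat \<Rightarrow> real) \<Rightarrow> real" where
  "l2dist n u w \<equiv> l2norm n (\<lambda>i. u i - w i)"

lemma separated_subset: "separated d r P \<Longrightarrow> Q \<subseteq> P \<Longrightarrow> separated d r Q"
  unfolding separated_def by blast

lemma card_le_1_if_separated_diameter:
  assumes "finite P" "separated d r P" "\<And>p p'. p \<in> P \<Longrightarrow> p' \<in> P \<Longrightarrow> d p p' \<le> r"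
  shows "card P \<le> 1"
  using assms unfolding separated_def by (force simp: card_le_Suc0_iff_eq)

lemma maximal_separated_subset:
  fixes d :: "'a \<Rightarrow> 'a \<Rightarrow> real"
  assumes sym: "\<And>x y. d x y = d y x" and refl: "\<And>x. d x x = 0" and r: "0 \<le> r"
    and bound: "\<And>P. P \<subseteq> W \<Longrightarrow> finite P \<Longrightarrow> separated d r P \<Longrightarrow> real (card P) \<le> K"
  obtains P where "P \<subseteq> W" "finite P" "separated d r P" "\<And>w. w \<in> W \<Longrightarrow> \<exists>p\<in>P. d p w \<le> r"
proof -
  define SS where "SS = (\<lambda>P. P \<subseteq> W \<and> finite P \<and> separated d r P)"
  have "SS {}" unfolding SS_def separated_def by simp
  moreover have "\<forall>P. SS P \<longrightarrow> card P < Suc (nat \<lceil>K\<rceil>)"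
    using bound unfolding SS_def by (smt (verit, best) less_Suc_eq_le of_nat_ceiling of_nat_le_iff)
  ultimately obtain P where SP: "SS P" and Pmax: "\<And>P'. SS P' \<Longrightarrow> card P' \<le> card P"
    using ex_has_greatest_nat[of SS "{}" card "Suc (nat \<lceil>K\<rceil>)"] by blast
  have "\<exists>p\<in>P. d p w \<le> r" if w: "w \<in> W" for w
  proof (rule ccontr)
    assume "\<not> (\<exists>p\<in>P. d p w \<le> r)"
    then have far: "\<And>p. p \<in> P \<Longrightarrow> r < d p w" by auto
    then have "w \<notin> P" using refl r by force
    moreover have "SS (insert w P)"
      using SP w far sym unfolding SS_def separated_def by auto
    ultimately show False using Pmax[of "insert w P"] SP unfolding SS_def by simp
  qed
  then show ?thesis using SP that unfolding SS_def by blast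
qed

text \<open>A maximal \<open>\<delta>/2\<close>-separated subset is a family of centres of closed balls of
  diameter \<open>\<delta>\<close> covering \<open>W\<close>.\<close>
lemma covering_number_le_if_separated_bound:
  fixes \<rho> :: "'a \<Rightarrow> 'a \<Rightarrow> real"
  assumes sym: "\<And>x y. \<rho> x y = \<rho> y x" and refl: "\<And>x. \<rho> x x = 0" and \<delta>: "0 \<le> \<delta>"
    and bound: "\<And>P. P \<subseteq> W \<Longrightarrow> finite P \<Longrightarrow> separated \<rho> (\<delta> / 2) P \<Longrightarrow> real (card P) \<le> K"
  shows "covering_number W \<rho> \<delta> \<noteq> \<infinity> \<and> real (the_enat (covering_number W \<rho> \<delta>)) \<le> K"
proof -
  have "\<exists>P. P \<subseteq> W \<and> finite P \<and> separated \<rho> (\<delta> / 2) P \<and> (\<forall>w\<in>W. \<exists>p\<in>P. \<rho> p w \<le> \<delta> / 2)"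
    by (rule maximal_separated_subset[where d=\<rho> and r="\<delta> / 2" and W=W and K=K, OF sym refl _ bound])
      (use \<delta> in auto)
  then obtain P where PW: "P \<subseteq> W" and Pfin: "finite P" and sepP: "separated \<rho> (\<delta> / 2) P"
    and cover: "\<And>w. w \<in> W \<Longrightarrow> \<exists>p\<in>P. \<rho> p w \<le> \<delta> / 2"
    by blast
  have "W \<subseteq> (\<Union>c\<in>P. {w. \<rho> c w \<le> \<delta> / 2})" using cover by blast
  then have "covering_number W \<rho> \<delta> \<le> enat (card P)"
    unfolding covering_number_def using Pfin by (intro Inf_lower) blast
  moreover have "real (card P) \<le> K" by (rule bound[OF PW Pfin sepP])
  ultimately show ?thesis by (cases "covering_number W \<rho> \<delta>") auto
qed

lemma one_le_covering_number:
  assumes "W \<noteq> {}" "covering_number W \<rho> \<delta> \<noteq> \<infinity>"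
  shows "1 \<le> the_enat (covering_number W \<rho> \<delta>)"
proof -
  have "enat 1 \<le> covering_number W \<rho> \<delta>"
    unfolding covering_number_def
  proof (rule Inf_greatest)
    fix x assume "x \<in> {enat (card F) | F. finite F \<and> W \<subseteq> (\<Union>c\<in>F. {w. \<rho> c w \<le> \<delta> / 2})}"
    then obtain F where F: "x = enat (card F)" "finite F" "W \<subseteq> (\<Union>c\<in>F. {w. \<rho> c w \<le> \<delta> / 2})" by auto
    then have "F \<noteq> {}" using assms(1) by auto
    then show "enat 1 \<le> x" using F by (simp add: Suc_le_eq card_gt_0_iff)
  qed
  then show ?thesis using assms(2) by (cases "covering_number W \<rho> \<delta>") auto
qed

lemma exists_power2_scale:
  fixes r h c :: real
  assumes r: "0 < r" and h: "0 < h" "h \<le> c * r"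
  obtains k :: nat where "h \<le> r * 2 ^ k" "2 ^ k \<le> 1 + 2 * c"
proof -
  obtain k0 :: nat where "h / r < 2 ^ k0" using real_arch_pow[of 2 "h / r"] by auto
  then have ex: "\<exists>k::nat. h \<le> r * 2 ^ k" using r by (intro exI[of _ k0]) (simp add: field_simps)
  define k where "k = (LEAST k::nat. h \<le> r * 2 ^ k)"
  have "h \<le> r * 2 ^ k" unfolding k_def by (rule LeastI_ex[OF ex])
  moreover have "(2::real) ^ k \<le> 1 + 2 * c"
  proof (cases k)
    case 0
    have "0 < c * r" using h by linarith
    then have "0 < c" using r by (simp add: zero_less_mult_iff)
    then show ?thesis using 0 by simp
  next
    case (Suc k')
    have "\<not> h \<le> r * 2 ^ k'"
    proof
      assume "h \<le> r * 2 ^ k'"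
      then have "k \<le> k'" unfolding k_def by (rule Least_le)
      then show False using Suc by simp
    qed
    then have "r * 2 ^ k < 2 * (c * r)" using Suc h by simp
    then show ?thesis using r by (simp add: mult.commute[of r] mult.assoc)
  qed
  ultimately show ?thesis using that by blast
qed

locale gauss_dominated =
  fixes n :: nat and h :: "(nat \<Rightarrow> real) \<Rightarrow> real" and T :: "(nat \<Rightarrow> real) set"
  assumes h_measurable[measurable]: "h \<in> borel_measurable (gauss n)"
    and integrable_h: "integrable (gauss n) h"
    and h_reflect: "\<And>z. z \<in> space (gauss n) \<Longrightarrow> h (reflect n z) = h z"
    and abs_dotp_le_h: "\<And>z u w. z \<in> space (gauss n) \<Longrightarrow> u \<in> T \<Longrightarrow> w \<in> T \<Longrightarrow> \<bar>dotp n z (\<lambda>i. u i - w i)\<bar> \<le> h z"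
    and finite_T: "finite T"
begin

definition Eh :: real where "Eh = (\<integral>z. h z \<partial>gauss n)"

lemma h_nonneg: "T \<noteq> {} \<Longrightarrow> z \<in> space (gauss n) \<Longrightarrow> 0 \<le> h z"
  using abs_dotp_le_h[of z] by (force simp: dotp_def)

lemma Eh_nonneg: "T \<noteq> {} \<Longrightarrow> 0 \<le> Eh"
  unfolding Eh_def by (intro Bochner_Integration.integral_nonneg h_nonneg)

lemma l2dist_le_Eh:
  assumes "u \<in> T" "w \<in> T"
  shows "l2dist n u w \<le> 6 * Eh"
proof -
  have "l2dist n u w \<le> 6 * (\<integral>z. \<bar>dotp n z (\<lambda>i. u i - w i)\<bar> \<partial>gauss n)"
    by (rule l2norm_le_expectation_abs_dotp)
  also have "(\<integral>z. \<bar>dotp n z (\<lambda>i. u i - w i)\<bar> \<partial>gauss n) \<le> Eh"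
    unfolding Eh_def using assms
    by (intro integral_mono integrable_abs integrable_gauss_linear integrable_h abs_dotp_le_h)
  finally show ?thesis by simp
qed

definition typical_translate :: "real \<Rightarrow> (nat \<Rightarrow> real) \<Rightarrow> (nat \<Rightarrow> real) set" where
  "typical_translate l q = {z\<in>space (gauss n). h (translate n (\<lambda>i. q i / l) z) \<le> 2 * Eh}"

lemma typical_translate_measurable[measurable]: "typical_translate l q \<in> sets (gauss n)"
  unfolding typical_translate_def by measurable

text \<open>Two points of \<open>T\<close> cannot both be typical after translation by \<open>u/l\<close> and \<open>w/l\<close>:
  subtracting, \<open>|u - w|\<^sup>2/l = \<langle>u/l - w/l, u - w\<rangle> \<le> 4 Eh\<close>.\<close>
lemma typical_translate_disjoint:
  assumes "u \<in> T" "w \<in> T" and l: "0 < l" "4 * Eh * l \<le> \<rho>\<^sup>2"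
    and sep: "\<rho> < l2dist n u w" and "0 \<le> \<rho>"
  shows "typical_translate l (\<lambda>i. u i - c i) \<inter> typical_translate l (\<lambda>i. w i - c i) = {}"
proof (rule ccontr)
  assume "typical_translate l (\<lambda>i. u i - c i) \<inter> typical_translate l (\<lambda>i. w i - c i) \<noteq> {}"
  then obtain z where z: "z \<in> space (gauss n)"
    and hu: "h (translate n (\<lambda>i. (u i - c i) / l) z) \<le> 2 * Eh"
    and hw: "h (translate n (\<lambda>i. (w i - c i) / l) z) \<le> 2 * Eh"
    unfolding typical_translate_def by auto
  define d where "d = (\<lambda>i. u i - w i)"
  have "dotp n (translate n (\<lambda>i. (u i - c i) / l) z) d - dotp n (translate n (\<lambda>i. (w i - c i) / l) z) d
      = dotp n d d / l"
    unfolding dotp_translate unfolding dotp_def d_def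
    by (simp add: sum_subtractf[symmetric] sum_divide_distrib diff_divide_distrib[symmetric] left_diff_distrib[symmetric])
  moreover have "\<bar>dotp n (translate n (\<lambda>i. (u i - c i) / l) z) d\<bar> \<le> h (translate n (\<lambda>i. (u i - c i) / l) z)"
    "\<bar>dotp n (translate n (\<lambda>i. (w i - c i) / l) z) d\<bar> \<le> h (translate n (\<lambda>i. (w i - c i) / l) z)"
    unfolding d_def using assms by (auto intro!: abs_dotp_le_h translate_in_space)
  ultimately have "(l2norm n d)\<^sup>2 / l \<le> 4 * Eh" using hu hw by (simp add: dotp_self)
  then have "(l2norm n d)\<^sup>2 \<le> \<rho>\<^sup>2" using l by (simp add: divide_le_eq)
  moreover have "\<rho>\<^sup>2 < (l2norm n d)\<^sup>2" using sep \<open>0 \<le> \<rho>\<close> unfolding d_def by (intro power_strict_mono) auto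
  ultimately show False by linarith
qed

text \<open>The typical event has probability at least 1/2 and is symmetric.\<close>
lemma measure_typical_translate_ge:
  assumes "T \<noteq> {}"
  shows "exp (- (l2norm n v)\<^sup>2 / (2 * l\<^sup>2)) / 2 \<le> measure (gauss n) (typical_translate l v)"
proof -
  define K where "K = {z\<in>space (gauss n). h z \<le> 2 * Eh}"
  define s where "s = (\<Sum>i<n. (v i / l)\<^sup>2)"
  have K[measurable]: "K \<in> sets (gauss n)" unfolding K_def by measurable
  have PK: "1/2 \<le> measure (gauss n) K"
    using measure_le_Markov[OF prob_space_gauss h_measurable integrable_h h_nonneg[OF assms], where b=Eh and \<kappa>=2]
    unfolding K_def Eh_def by auto
  have "(l2norm n v)\<^sup>2 / (2 * l\<^sup>2) = s / 2"
    unfolding s_def by (simp add: power_divide sum_divide_distrib[symmetric] power2_l2norm)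
  then have "exp (- (l2norm n v)\<^sup>2 / (2 * l\<^sup>2)) / 2 = exp (- s / 2) * (1/2)"
    by (simp add: minus_divide_left[symmetric])
  also have "\<dots> \<le> exp (- s / 2) * measure (gauss n) K"
    using PK by (intro mult_left_mono) auto
  also have "\<dots> \<le> measure (gauss n) (typical_translate l v)"
  proof -
    have "reflect n z \<in> K \<longleftrightarrow> z \<in> K" if "z \<in> space (gauss n)" for z
      using that reflect_in_space h_reflect[OF that] unfolding K_def by auto
    from measure_translate_symmetric_ge[OF K this, of "\<lambda>i. v i / l"] show ?thesis
      unfolding typical_translate_def K_def s_def by (simp add: translate_in_space)
  qed
  finally show ?thesis .
qed

text \<open>The translates of the typical event by \<open>(q - c)/l\<close>, \<open>q \<in> Q\<close>, are disjoint and each has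
  probability at least \<open>exp(-R\<^sup>2/(2l\<^sup>2))/2\<close>.\<close>
lemma card_separated_in_ball_le:
  assumes QT: "Q \<subseteq> T" and R: "\<And>q. q \<in> Q \<Longrightarrow> l2dist n q c \<le> R"
    and sep: "separated (l2dist n) \<rho> Q" and \<rho>: "0 < \<rho>" and Eh: "0 < Eh"
  shows "real (card Q) \<le> 2 * exp (8 * R\<^sup>2 * Eh\<^sup>2 / \<rho>^4)"
proof (cases "Q = {}")
  case True then show ?thesis by simp
next
  case False
  interpret prob_space "gauss n" by (rule prob_space_gauss)
  have Qfin: "finite Q" using QT finite_T finite_subset by auto
  define l where "l = \<rho>\<^sup>2 / (4 * Eh)"
  have l: "0 < l" "4 * Eh * l \<le> \<rho>\<^sup>2" unfolding l_def using \<rho> Eh by auto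
  define E where "E = (\<lambda>q. typical_translate l (\<lambda>i. q i - c i))"
  have PE: "exp (- R\<^sup>2 / (2 * l\<^sup>2)) / 2 \<le> measure (gauss n) (E q)" if q: "q \<in> Q" for q
  proof -
    have "(l2dist n q c)\<^sup>2 \<le> R\<^sup>2" using R[OF q] l2norm_nonneg by (intro power_mono) auto
    then have "exp (- R\<^sup>2 / (2 * l\<^sup>2)) / 2 \<le> exp (- (l2dist n q c)\<^sup>2 / (2 * l\<^sup>2)) / 2"
      using l by (simp add: divide_right_mono)
    also have "\<dots> \<le> measure (gauss n) (E q)"
      unfolding E_def using False QT by (intro measure_typical_translate_ge) auto
    finally show ?thesis .
  qed
  have "disjoint_family_on E Q"
    unfolding disjoint_family_on_def E_def
  proof (intro ballI impI)
    fix q q' assume "q \<in> Q" "q' \<in> Q" "q \<noteq> q'"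
    with sep QT l \<rho> show "typical_translate l (\<lambda>i. q i - c i) \<inter> typical_translate l (\<lambda>i. q' i - c i) = {}"
      unfolding separated_def by (intro typical_translate_disjoint) auto
  qed
  then have "(\<Sum>q\<in>Q. measure (gauss n) (E q)) \<le> 1"
    using Qfin prob_le_1 by (subst measure_finite_Union[symmetric]) (auto simp: E_def)
  moreover have "(\<Sum>q\<in>Q. exp (- R\<^sup>2 / (2 * l\<^sup>2)) / 2) \<le> (\<Sum>q\<in>Q. measure (gauss n) (E q))"
    by (intro sum_mono PE)
  ultimately have "real (card Q) * (exp (- R\<^sup>2 / (2 * l\<^sup>2)) / 2) \<le> 1"
    by simp
  then have "real (card Q) \<le> 2 * exp (R\<^sup>2 / (2 * l\<^sup>2))"
    by (simp add: exp_minus field_simps)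
  also have "R\<^sup>2 / (2 * l\<^sup>2) = 8 * R\<^sup>2 * Eh\<^sup>2 / \<rho>^4"
    unfolding l_def using \<rho> Eh by (simp add: field_simps power2_eq_square power4_eq_xxxx)
  finally show ?thesis .
qed

lemma card_le_card_net:
  assumes QT: "Q \<subseteq> T" and sQ: "separated (l2dist n) \<rho> Q" and \<rho>: "0 < \<rho>" and Eh: "0 < Eh"
    and Pfin: "finite P" and cover: "\<And>q. q \<in> Q \<Longrightarrow> \<exists>p\<in>P. l2dist n p q \<le> 2 * \<rho>"
  shows "real (card Q) \<le> real (card P) * (2 * exp (32 * Eh\<^sup>2 / \<rho>\<^sup>2))"
proof -
  define Qp where "Qp = (\<lambda>p. {q\<in>Q. l2dist n q p \<le> 2 * \<rho>})"
  have card_Qp: "real (card (Qp p)) \<le> 2 * exp (32 * Eh\<^sup>2 / \<rho>\<^sup>2)" for p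
  proof -
    have "real (card (Qp p)) \<le> 2 * exp (8 * (2 * \<rho>)\<^sup>2 * Eh\<^sup>2 / \<rho>^4)"
      using QT separated_subset[OF sQ] \<rho> Eh unfolding Qp_def
      by (intro card_separated_in_ball_le) auto
    also have "8 * (2 * \<rho>)\<^sup>2 * Eh\<^sup>2 / \<rho>^4 = 32 * Eh\<^sup>2 / \<rho>\<^sup>2"
      using \<rho> by (simp add: field_simps power2_eq_square power4_eq_xxxx)
    finally show ?thesis .
  qed
  have "Q \<subseteq> (\<Union>p\<in>P. Qp p)"
  proof
    fix q assume q: "q \<in> Q"
    then obtain p where "p \<in> P" "l2dist n p q \<le> 2 * \<rho>" using cover by blast
    then show "q \<in> (\<Union>p\<in>P. Qp p)" using q l2norm_diff_commute[of n p q] unfolding Qp_def by auto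
  qed
  then have "card Q \<le> (\<Sum>p\<in>P. card (Qp p))"
    using Pfin finite_subset[OF QT finite_T] by (intro order_trans[OF card_mono card_UN_le]) (auto simp: Qp_def)
  then have "real (card Q) \<le> (\<Sum>p\<in>P. real (card (Qp p)))"
    by (simp only: of_nat_sum[symmetric] of_nat_le_iff)
  also have "\<dots> \<le> real (card P) * (2 * exp (32 * Eh\<^sup>2 / \<rho>\<^sup>2))"
    using sum_mono[of P, OF card_Qp] by simp
  finally show ?thesis .
qed

text \<open>Multiscale argument: a maximal \<open>2\<rho>\<close>-separated subset of \<open>Q\<close> is handled at the
  coarser scale, and the recursion stops once \<open>\<rho>\<close> exceeds the diameter bound \<open>6 Eh\<close>.\<close>
lemma card_separated_le_multiscale:
  assumes Eh: "0 < Eh"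
  shows "0 < \<rho> \<Longrightarrow> 6 * Eh \<le> \<rho> * 2^k \<Longrightarrow> Q \<subseteq> T \<Longrightarrow> separated (l2dist n) \<rho> Q \<Longrightarrow>
    real (card Q) \<le> 2^k * exp (43 * Eh\<^sup>2 / \<rho>\<^sup>2)"
proof (induction k arbitrary: \<rho> Q)
  case 0
  have "card Q \<le> 1"
  proof (rule card_le_1_if_separated_diameter[where d="l2dist n" and r=\<rho>])
    show "finite Q" using 0 finite_T finite_subset by blast
    show "separated (l2dist n) \<rho> Q" using 0 by blast
    show "l2dist n p p' \<le> \<rho>" if "p \<in> Q" "p' \<in> Q" for p p'
    proof -
      have "l2dist n p p' \<le> 6 * Eh" using 0 that by (intro l2dist_le_Eh) auto
      then show ?thesis using 0 by simp
    qed
  qed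
  then show ?case by (simp add: order_trans[of _ 1])
next
  case (Suc k)
  have \<rho>: "0 < \<rho>" and QT: "Q \<subseteq> T" and sQ: "separated (l2dist n) \<rho> Q" by fact+
  have Qfin: "finite Q" using QT finite_T finite_subset by auto
  have "\<exists>P. P \<subseteq> Q \<and> finite P \<and> separated (l2dist n) (2 * \<rho>) P \<and> (\<forall>q\<in>Q. \<exists>p\<in>P. l2dist n p q \<le> 2 * \<rho>)"
  proof (rule maximal_separated_subset[where d="l2dist n" and r="2 * \<rho>" and W=Q and K="real (card Q)"])
    show "l2dist n x y = l2dist n y x" for x y by (rule l2norm_diff_commute)
    show "l2dist n x x = 0" for x by (simp add: l2norm_def)
    show "0 \<le> 2 * \<rho>" using \<rho> by simp
    show "real (card P) \<le> real (card Q)" if "P \<subseteq> Q" for P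
      using that Qfin by (simp add: card_mono)
  qed blast
  then obtain P where PQ: "P \<subseteq> Q" and Pfin: "finite P" and sP: "separated (l2dist n) (2 * \<rho>) P"
    and cover: "\<And>q. q \<in> Q \<Longrightarrow> \<exists>p\<in>P. l2dist n p q \<le> 2 * \<rho>"
    by blast
  have "real (card P) \<le> 2^k * exp (43 * Eh\<^sup>2 / (2 * \<rho>)\<^sup>2)"
    using Suc.prems PQ sP by (intro Suc.IH) auto
  then have "real (card Q) \<le> 2^k * exp (43 * Eh\<^sup>2 / (2 * \<rho>)\<^sup>2) * (2 * exp (32 * Eh\<^sup>2 / \<rho>\<^sup>2))"
    using card_le_card_net[OF QT sQ \<rho> Eh Pfin cover] by (smt (verit) exp_gt_zero mult_right_mono)
  also have "\<dots> = 2^Suc k * exp ((171 / 4) * (Eh\<^sup>2 / \<rho>\<^sup>2))"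
    using \<rho> by (simp add: exp_add[symmetric] field_simps power2_eq_square)
  also have "\<dots> \<le> 2^Suc k * exp (43 * Eh\<^sup>2 / \<rho>\<^sup>2)"
    using mult_right_mono[of "171 / 4" 43 "Eh\<^sup>2 / \<rho>\<^sup>2"] by simp
  finally show ?case .
qed

theorem card_separated_le_exp:
  assumes r: "0 \<le> r" and sepT: "separated (l2dist n) r T" and Eh_le: "Eh \<le> q * r" and q: "0 < q"
  shows "real (card T) \<le> exp (1 + 79 * q\<^sup>2)"
proof (cases "T = {} \<or> Eh = 0")
  case True
  have "card T \<le> 1"
  proof (rule card_le_1_if_separated_diameter[where d="l2dist n" and r=r])
    show "l2dist n p p' \<le> r" if "p \<in> T" "p' \<in> T" for p p'
      using True l2dist_le_Eh[OF that] r that by auto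
  qed (use finite_T sepT in auto)
  then have "real (card T) \<le> 1" by simp
  also have "1 \<le> exp (1 + 79 * q\<^sup>2)" by simp
  finally show ?thesis .
next
  case False
  then have "T \<noteq> {}" "Eh \<noteq> 0" by auto
  then have Eh: "0 < Eh" using Eh_nonneg by (simp add: less_le)
  have rp: "0 < r" using Eh Eh_le q r by (cases "r = 0") auto
  obtain k where kk: "6 * Eh \<le> r * 2 ^ k" and pow_k: "(2::real) ^ k \<le> 1 + 2 * (6 * q)"
    using exists_power2_scale[of r "6 * Eh" "6 * q"] rp Eh Eh_le by auto
  have "(Eh / r)\<^sup>2 \<le> q\<^sup>2" using Eh_le rp Eh by (intro power_mono) (auto simp: divide_le_eq mult.commute)
  then have "exp (43 * Eh\<^sup>2 / r\<^sup>2) \<le> exp (43 * q\<^sup>2)" by (simp add: power_divide)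
  have "real (card T) \<le> 2^k * exp (43 * Eh\<^sup>2 / r\<^sup>2)"
    using card_separated_le_multiscale[OF Eh rp] kk sepT by auto
  also have "\<dots> \<le> exp (12 * q) * exp (43 * q\<^sup>2)"
    using pow_k \<open>exp (43 * Eh\<^sup>2 / r\<^sup>2) \<le> exp (43 * q\<^sup>2)\<close> exp_ge_add_one_self[of "12 * q"]
    by (intro mult_mono order_trans[OF pow_k]) auto
  also have "\<dots> \<le> exp (1 + 79 * q\<^sup>2)"
    using sum_power2_ge_zero[of "6 * q - 1" 0] by (simp add: exp_add[symmetric] power2_eq_square algebra_simps)
  finally show ?thesis .
qed

end

section \<open>The Gaussian process attached to the coefficients\<close>

definition bilin :: "(nat \<Rightarrow> nat \<Rightarrow> nat \<Rightarrow> real) \<Rightarrow> nat \<Rightarrow> nat \<Rightarrow> (nat \<Rightarrow> real) \<Rightarrow> (nat \<Rightarrow> real) \<Rightarrow> (nat \<Rightarrow> real)" where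
  "bilin a n m x t = (\<lambda>i. \<Sum>j<n. \<Sum>k<m. a i j k * x j * t k)"

definition coeff_l1 :: "(nat \<Rightarrow> nat \<Rightarrow> nat \<Rightarrow> real) \<Rightarrow> nat \<Rightarrow> nat \<Rightarrow> real" where
  "coeff_l1 a n m = (\<Sum>i<n. \<Sum>j<n. \<Sum>k<m. \<bar>a i j k\<bar>)"

lemma dotp_bilin: "dotp n g (bilin a n m x t) = (\<Sum>i<n. \<Sum>j<n. \<Sum>k<m. a i j k * g i * x j * t k)"
  unfolding dotp_def bilin_def by (simp add: sum_distrib_left mult_ac)

lemma alphaA_tensor: "alphaA a n m (tensor x t) = l2norm n (bilin a n m x t)"
  unfolding alphaA_def tensor_def l2norm_def bilin_def by (simp add: mult.assoc)

lemma dA_eq_l2dist: "dA a n m p q = l2dist n (bilin a n m (fst p) (snd p)) (bilin a n m (fst q) (snd q))"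
  unfolding dA_def alphaA_def tensor_def l2norm_def bilin_def
  by (simp add: right_diff_distrib sum_subtractf mult.assoc)

lemma dA_commute: "dA a n m p q = dA a n m q p"
  unfolding dA_eq_l2dist by (rule l2norm_diff_commute)

lemma dA_self: "dA a n m p p = 0"
  unfolding dA_eq_l2dist by (simp add: l2norm_def)

lemma bilin_linear_left: "bilin a n m g t i = (\<Sum>j<n. (\<Sum>k<m. a i j k * t k) * g j)"
  unfolding bilin_def by (simp add: sum_distrib_right sum_distrib_left mult_ac)

lemma bilin_translate: "bilin a n m (translate n c g) t i = bilin a n m g t i + bilin a n m c t i"
  unfolding bilin_def translate_def by (simp add: sum.distrib[symmetric] algebra_simps)

lemma bilin_divide: "bilin a n m (\<lambda>j. x j / e) t i = bilin a n m x t i / e"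
  unfolding bilin_def by (simp add: sum_divide_distrib)

lemma bilin_reflect: "bilin a n m (reflect n w) t = (\<lambda>i. - bilin a n m w t i)"
  unfolding bilin_def reflect_def by (simp add: sum_negf[symmetric])

lemma dotp_bilin_combination:
  assumes "\<And>j. j < n \<Longrightarrow> u j = v j + s * z j"
  shows "dotp n g (bilin a n m u t) = dotp n g (bilin a n m v t) + s * dotp n g (bilin a n m z t)"
  unfolding dotp_bilin using assms by (simp add: sum.distrib sum_distrib_left algebra_simps)

lemma abs_sum3_le_coeff_l1:
  assumes "\<And>i j k. i < n \<Longrightarrow> j < n \<Longrightarrow> k < m \<Longrightarrow> \<bar>f i j k\<bar> \<le> \<bar>a i j k\<bar> * c"
  shows "\<bar>\<Sum>i<n. \<Sum>j<n. \<Sum>k<m. f i j k\<bar> \<le> coeff_l1 a n m * c"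
proof -
  have "\<bar>\<Sum>i<n. \<Sum>j<n. \<Sum>k<m. f i j k\<bar> \<le> (\<Sum>i<n. \<Sum>j<n. \<Sum>k<m. \<bar>f i j k\<bar>)"
    by (intro order_trans[OF sum_abs] sum_mono order_trans[OF sum_abs] sum_abs)
  also have "\<dots> \<le> (\<Sum>i<n. \<Sum>j<n. \<Sum>k<m. \<bar>a i j k\<bar> * c)"
    by (intro sum_mono assms) auto
  also have "\<dots> = coeff_l1 a n m * c"
    unfolding coeff_l1_def by (simp add: sum_distrib_right)
  finally show ?thesis .
qed

lemma abs_dotp_bilin_le:
  assumes "\<And>k. k < m \<Longrightarrow> \<bar>t k\<bar> \<le> Tb"
  shows "\<bar>dotp n g (bilin a n m x t)\<bar> \<le> coeff_l1 a n m * (l1norm n g * l1norm n x * Tb)"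
  unfolding dotp_bilin
proof (rule abs_sum3_le_coeff_l1)
  fix i j k assume "i < n" "j < n" "k < m"
  then have "\<bar>g i\<bar> * \<bar>x j\<bar> * \<bar>t k\<bar> \<le> l1norm n g * l1norm n x * Tb"
    using assms by (intro mult_mono abs_le_l1norm) (auto simp: l1norm_nonneg)
  then show "\<bar>a i j k * g i * x j * t k\<bar> \<le> \<bar>a i j k\<bar> * (l1norm n g * l1norm n x * Tb)"
    by (simp add: abs_mult mult.assoc mult_left_mono)
qed

lemma l2norm_bilin_le:
  assumes "\<And>k. k < m \<Longrightarrow> \<bar>t k\<bar> \<le> Tb"
  shows "l2norm n (bilin a n m g t) \<le> coeff_l1 a n m * (l1norm n g * Tb)"
proof -
  have "l2norm n (bilin a n m g t) \<le> (\<Sum>i<n. \<bar>bilin a n m g t i\<bar>)"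
    using l2norm_le_l1norm unfolding l1norm_def .
  also have "\<dots> \<le> (\<Sum>i<n. \<Sum>j<n. \<Sum>k<m. \<bar>a i j k * g j * t k\<bar>)"
    unfolding bilin_def by (intro sum_mono order_trans[OF sum_abs] sum_abs)
  also have "\<dots> \<le> (\<Sum>i<n. \<Sum>j<n. \<Sum>k<m. \<bar>a i j k\<bar> * (l1norm n g * Tb))"
  proof (intro sum_mono)
    fix i j k assume "j \<in> {..<n}" "k \<in> {..<m}"
    then have "\<bar>g j\<bar> * \<bar>t k\<bar> \<le> l1norm n g * Tb"
      using assms by (intro mult_mono abs_le_l1norm) (auto simp: l1norm_nonneg)
    then show "\<bar>a i j k * g j * t k\<bar> \<le> \<bar>a i j k\<bar> * (l1norm n g * Tb)"
      by (simp add: abs_mult mult.assoc mult_left_mono)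
  qed
  also have "\<dots> = coeff_l1 a n m * (l1norm n g * Tb)"
    unfolding coeff_l1_def by (simp add: sum_distrib_right)
  finally show ?thesis .
qed

lemma borel_measurable_l2norm_bilin[measurable]:
  "(\<lambda>g. l2norm n (bilin a n m g t)) \<in> borel_measurable (gauss n)"
  unfolding l2norm_def bilin_linear_left by measurable

lemma sup_diff_le:
  fixes f1 f2 :: "'a \<Rightarrow> real"
  assumes "S \<noteq> {}" "bdd_above (f1 ` S)" "bdd_above (f2 ` S)" "\<And>t. t \<in> S \<Longrightarrow> \<bar>f1 t - f2 t\<bar> \<le> c"
  shows "\<bar>(SUP t\<in>S. f1 t) - (SUP t\<in>S. f2 t)\<bar> \<le> c"
proof -
  have "(SUP t\<in>S. f1 t) \<le> (SUP t\<in>S. f2 t) + c" "(SUP t\<in>S. f2 t) \<le> (SUP t\<in>S. f1 t) + c"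
    using assms cSUP_upper[of _ S f1] cSUP_upper[of _ S f2]
    by (fastforce intro!: cSUP_least simp: abs_le_iff)+
  then show ?thesis by linarith
qed

locale tensor_process =
  fixes a :: "nat \<Rightarrow> nat \<Rightarrow> nat \<Rightarrow> real" and n m :: nat and S :: "(nat \<Rightarrow> real) set" and Tb :: real
  assumes S_nonempty: "S \<noteq> {}" and S_bounded: "\<And>t k. t \<in> S \<Longrightarrow> k < m \<Longrightarrow> \<bar>t k\<bar> \<le> Tb"
begin

definition sup_dotp :: "(nat \<Rightarrow> real) \<Rightarrow> (nat \<Rightarrow> real) \<Rightarrow> real" where
  "sup_dotp x g = (SUP t\<in>S. \<bar>dotp n g (bilin a n m x t)\<bar>)"

abbreviation beta :: "(nat \<Rightarrow> real) \<Rightarrow> real" where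
  "beta \<equiv> betaAS a n m S"

lemma abs_dotp_bilin_le_S:
  "t \<in> S \<Longrightarrow> \<bar>dotp n g (bilin a n m x t)\<bar> \<le> coeff_l1 a n m * (l1norm n g * l1norm n x * Tb)"
  using S_bounded by (intro abs_dotp_bilin_le) auto

lemma bdd_above_abs_dotp_bilin: "bdd_above ((\<lambda>t. \<bar>dotp n g (bilin a n m x t)\<bar>) ` S)"
  using abs_dotp_bilin_le_S by (intro bdd_aboveI2) blast

lemma abs_dotp_bilin_le_sup_dotp: "t \<in> S \<Longrightarrow> \<bar>dotp n g (bilin a n m x t)\<bar> \<le> sup_dotp x g"
  unfolding sup_dotp_def by (rule cSUP_upper[OF _ bdd_above_abs_dotp_bilin])

lemma sup_dotp_nonneg: "0 \<le> sup_dotp x g"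
proof -
  obtain t where "t \<in> S" using S_nonempty by auto
  then show ?thesis using abs_dotp_bilin_le_sup_dotp[of t g x] by linarith
qed

lemma sup_dotp_le: "sup_dotp x g \<le> coeff_l1 a n m * (l1norm n g * l1norm n x * Tb)"
  unfolding sup_dotp_def by (rule cSUP_least[OF S_nonempty abs_dotp_bilin_le_S])

lemma sup_dotp_lipschitz_right:
  "\<bar>sup_dotp x g - sup_dotp x g'\<bar> \<le> (coeff_l1 a n m * (l1norm n x * Tb)) * (\<Sum>i<n. \<bar>g i - g' i\<bar>)"
  unfolding sup_dotp_def
proof (rule sup_diff_le[OF S_nonempty bdd_above_abs_dotp_bilin bdd_above_abs_dotp_bilin])
  fix t assume t: "t \<in> S"
  have "\<bar>\<bar>dotp n g (bilin a n m x t)\<bar> - \<bar>dotp n g' (bilin a n m x t)\<bar>\<bar>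
      \<le> \<bar>dotp n (\<lambda>i. g i - g' i) (bilin a n m x t)\<bar>"
    unfolding dotp_diff_left[symmetric] by (rule abs_triangle_ineq3)
  also have "\<dots> \<le> coeff_l1 a n m * (l1norm n (\<lambda>i. g i - g' i) * l1norm n x * Tb)"
    by (rule abs_dotp_bilin_le_S[OF t])
  finally show "\<bar>\<bar>dotp n g (bilin a n m x t)\<bar> - \<bar>dotp n g' (bilin a n m x t)\<bar>\<bar>
      \<le> coeff_l1 a n m * (l1norm n x * Tb) * (\<Sum>i<n. \<bar>g i - g' i\<bar>)"
    by (simp add: l1norm_def mult_ac)
qed

lemma sup_dotp_lipschitz_left:
  "\<bar>sup_dotp x g - sup_dotp x' g\<bar> \<le> (coeff_l1 a n m * (l1norm n g * Tb)) * (\<Sum>j<n. \<bar>x j - x' j\<bar>)"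
  unfolding sup_dotp_def
proof (rule sup_diff_le[OF S_nonempty bdd_above_abs_dotp_bilin bdd_above_abs_dotp_bilin])
  fix t assume t: "t \<in> S"
  have "dotp n g (bilin a n m x t) = dotp n g (bilin a n m x' t) + 1 * dotp n g (bilin a n m (\<lambda>j. x j - x' j) t)"
    by (rule dotp_bilin_combination) simp
  then have "dotp n g (bilin a n m x t) - dotp n g (bilin a n m x' t) = dotp n g (bilin a n m (\<lambda>j. x j - x' j) t)"
    by simp
  then have "\<bar>\<bar>dotp n g (bilin a n m x t)\<bar> - \<bar>dotp n g (bilin a n m x' t)\<bar>\<bar>
      \<le> \<bar>dotp n g (bilin a n m (\<lambda>j. x j - x' j) t)\<bar>"
    using abs_triangle_ineq3[of "dotp n g (bilin a n m x t)" "dotp n g (bilin a n m x' t)"] by simp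
  also have "\<dots> \<le> coeff_l1 a n m * (l1norm n g * l1norm n (\<lambda>j. x j - x' j) * Tb)"
    by (rule abs_dotp_bilin_le_S[OF t])
  finally show "\<bar>\<bar>dotp n g (bilin a n m x t)\<bar> - \<bar>dotp n g (bilin a n m x' t)\<bar>\<bar>
      \<le> coeff_l1 a n m * (l1norm n g * Tb) * (\<Sum>j<n. \<bar>x j - x' j\<bar>)"
    by (simp add: l1norm_def mult_ac)
qed

lemma sup_dotp_combination:
  assumes "\<And>j. j < n \<Longrightarrow> u j = v j + s * z j"
  shows "sup_dotp u g \<le> sup_dotp v g + \<bar>s\<bar> * sup_dotp z g"
  unfolding sup_dotp_def
proof (rule cSUP_least[OF S_nonempty])
  fix t assume t: "t \<in> S"
  have "\<bar>dotp n g (bilin a n m u t)\<bar> \<le> \<bar>dotp n g (bilin a n m v t)\<bar> + \<bar>s\<bar> * \<bar>dotp n g (bilin a n m z t)\<bar>"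
    using abs_triangle_ineq[of "dotp n g (bilin a n m v t)" "s * dotp n g (bilin a n m z t)"]
    by (simp add: dotp_bilin_combination[OF assms] abs_mult)
  also have "\<dots> \<le> sup_dotp v g + \<bar>s\<bar> * sup_dotp z g"
    using abs_dotp_bilin_le_sup_dotp[OF t] by (intro add_mono mult_left_mono) auto
  finally show "\<bar>dotp n g (bilin a n m u t)\<bar>
      \<le> (SUP t\<in>S. \<bar>dotp n g (bilin a n m v t)\<bar>) + \<bar>s\<bar> * (SUP t\<in>S. \<bar>dotp n g (bilin a n m z t)\<bar>)"
    unfolding sup_dotp_def .
qed

lemma sup_dotp_reflect_right: "g \<in> space (gauss n) \<Longrightarrow> sup_dotp x (reflect n g) = sup_dotp x g"
  unfolding sup_dotp_def by (simp add: dotp_reflect)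

lemma sup_dotp_uminus_left:
  assumes "\<And>j. j < n \<Longrightarrow> x' j = - x j"
  shows "sup_dotp x' g = sup_dotp x g"
proof -
  have "dotp n g (bilin a n m x' t) = - dotp n g (bilin a n m x t)" for t
    unfolding dotp_bilin using assms by (simp add: sum_negf[symmetric])
  then show ?thesis unfolding sup_dotp_def by simp
qed

lemma borel_measurable_sup_dotp[measurable]: "sup_dotp x \<in> borel_measurable (gauss n)"
  by (rule lipschitz_imp_borel_measurable_gauss[OF sup_dotp_lipschitz_right])

lemma integrable_sup_dotp: "integrable (gauss n) (sup_dotp x)"
proof (rule integrable_gauss_l1norm_bounded[where C="coeff_l1 a n m * l1norm n x * Tb"])
  show "\<bar>sup_dotp x g\<bar> \<le> coeff_l1 a n m * l1norm n x * Tb * l1norm n g" for g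
    using sup_dotp_le[of x g] sup_dotp_nonneg[of x g] by (simp add: mult_ac)
qed simp

lemma beta_eq_integral_sup_dotp: "beta x = (\<integral>g. sup_dotp x g \<partial>gauss n)"
  unfolding betaAS_def sup_dotp_def dotp_bilin ..

lemma beta_nonneg: "0 \<le> beta x"
  unfolding beta_eq_integral_sup_dotp by (intro Bochner_Integration.integral_nonneg sup_dotp_nonneg)

lemma beta_zero:
  assumes "\<And>j. j < n \<Longrightarrow> x j = 0" shows "beta x = 0"
proof -
  have "l1norm n x = 0" unfolding l1norm_def using assms by simp
  then have "sup_dotp x = (\<lambda>_. 0)"
    using sup_dotp_le[of x] sup_dotp_nonneg[of x] by (intro ext order_antisym) auto
  then show ?thesis unfolding beta_eq_integral_sup_dotp by simp
qed

lemma beta_lipschitz: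
  "\<bar>beta x - beta x'\<bar> \<le> coeff_l1 a n m * Tb * (\<integral>g. l1norm n g \<partial>gauss n) * (\<Sum>j<n. \<bar>x j - x' j\<bar>)"
proof -
  define C where "C = coeff_l1 a n m * Tb * (\<Sum>j<n. \<bar>x j - x' j\<bar>)"
  have pointwise: "\<bar>sup_dotp x g - sup_dotp x' g\<bar> \<le> C * l1norm n g" for g
    using sup_dotp_lipschitz_left[of x g x'] unfolding C_def by (simp only: ac_simps)
  have "beta x - beta x' = (\<integral>g. sup_dotp x g - sup_dotp x' g \<partial>gauss n)"
    unfolding beta_eq_integral_sup_dotp
    by (rule Bochner_Integration.integral_diff[symmetric]) (rule integrable_sup_dotp)+
  then have "\<bar>beta x - beta x'\<bar> \<le> (\<integral>g. \<bar>sup_dotp x g - sup_dotp x' g\<bar> \<partial>gauss n)"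
    using integral_abs_bound by simp
  also have "\<dots> \<le> (\<integral>g. C * l1norm n g \<partial>gauss n)"
  proof (rule integral_mono)
    show "integrable (gauss n) (\<lambda>g. \<bar>sup_dotp x g - sup_dotp x' g\<bar>)"
      by (intro integrable_abs Bochner_Integration.integrable_diff integrable_sup_dotp)
    show "integrable (gauss n) (\<lambda>g. C * l1norm n g)"
      by (intro integrable_mult_right integrable_l1norm_gauss)
  qed (rule pointwise)
  also have "\<dots> = C * (\<integral>g. l1norm n g \<partial>gauss n)"
    by (rule integral_mult_right_zero)
  finally show ?thesis unfolding C_def by (simp only: ac_simps)
qed

lemma borel_measurable_beta[measurable]: "beta \<in> borel_measurable (gauss n)"
  by (rule lipschitz_imp_borel_measurable_gauss[OF beta_lipschitz])

lemma beta_le_l1norm: "beta x \<le> \<bar>coeff_l1 a n m * Tb * (\<integral>g. l1norm n g \<partial>gauss n)\<bar> * l1norm n x"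
proof -
  have "beta x \<le> coeff_l1 a n m * Tb * (\<integral>g. l1norm n g \<partial>gauss n) * l1norm n x"
    using beta_lipschitz[of x "\<lambda>_. 0"] beta_zero[of "\<lambda>_. 0"] by (simp add: l1norm_def)
  also have "\<dots> \<le> \<bar>coeff_l1 a n m * Tb * (\<integral>g. l1norm n g \<partial>gauss n)\<bar> * l1norm n x"
    using l1norm_nonneg by (intro mult_right_mono) auto
  finally show ?thesis .
qed

lemma integrable_beta: "integrable (gauss n) beta"
proof (rule integrable_gauss_l1norm_bounded)
  show "\<bar>beta g\<bar> \<le> \<bar>coeff_l1 a n m * Tb * (\<integral>g. l1norm n g \<partial>gauss n)\<bar> * l1norm n g" for g
    using beta_le_l1norm[of g] beta_nonneg[of g] by simp
qed simp

lemma beta_combination: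
  assumes "\<And>j. j < n \<Longrightarrow> u j = v j + s * z j"
  shows "beta u \<le> beta v + \<bar>s\<bar> * beta z"
proof -
  have "beta u \<le> (\<integral>g. sup_dotp v g + \<bar>s\<bar> * sup_dotp z g \<partial>gauss n)"
    unfolding beta_eq_integral_sup_dotp using sup_dotp_combination[OF assms]
    by (intro integral_mono integrable_sup_dotp Bochner_Integration.integrable_add integrable_mult_right)
  also have "\<dots> = beta v + \<bar>s\<bar> * beta z"
    unfolding beta_eq_integral_sup_dotp by (simp add: integrable_sup_dotp)
  finally show ?thesis .
qed

lemma beta_uminus:
  assumes "\<And>j. j < n \<Longrightarrow> x' j = - x j" shows "beta x' = beta x"
proof -
  have "sup_dotp x' = sup_dotp x" using sup_dotp_uminus_left[OF assms] by (rule ext)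
  then show ?thesis unfolding beta_eq_integral_sup_dotp by simp
qed

lemma integrable_l2norm_bilin:
  assumes "t \<in> S" shows "integrable (gauss n) (\<lambda>g. l2norm n (bilin a n m g t))"
  using l2norm_bilin_le[of m t Tb n a] S_bounded[OF assms] l2norm_nonneg
  by (intro integrable_gauss_l1norm_bounded[where C="coeff_l1 a n m * Tb"]) (auto simp: mult_ac)

lemma l2norm_bilin_le_beta:
  assumes "t \<in> S" shows "l2norm n (bilin a n m x t) \<le> 6 * beta x"
proof -
  have "(\<integral>g. \<bar>dotp n g (bilin a n m x t)\<bar> \<partial>gauss n) \<le> beta x"
    unfolding beta_eq_integral_sup_dotp using assms
    by (intro integral_mono integrable_abs integrable_gauss_linear integrable_sup_dotp abs_dotp_bilin_le_sup_dotp)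
  then show ?thesis using l2norm_le_expectation_abs_dotp[of n "bilin a n m x t"] by linarith
qed

end

section \<open>Separated subsets of U \<times> S\<close>

lemma unit_ball_abs_le_1: "x \<in> unit_ball n \<Longrightarrow> j < n \<Longrightarrow> \<bar>x j\<bar> \<le> 1"
  unfolding unit_ball_def
  using member_le_sum[of j "{..<n}" "\<lambda>j. (x j)\<^sup>2"] abs_le_square_iff[of "x j" 1] by auto

locale packing_setting = tensor_process +
  fixes U :: "(nat \<Rightarrow> real) set"
  assumes U_nonempty: "U \<noteq> {}" and U_unit_ball: "U \<subseteq> unit_ball n"
begin

definition mean_beta :: real where "mean_beta = (\<integral>g. beta g \<partial>gauss n)"

definition sup_beta :: real where "sup_beta = (SUP x\<in>U. beta x)"

definition sup_mean_bilin :: real where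
  "sup_mean_bilin = (SUP t\<in>S. \<integral>g. l2norm n (bilin a n m g t) \<partial>gauss n)"

definition packing_radius :: "real \<Rightarrow> real" where
  "packing_radius \<epsilon> = 4 * \<epsilon>\<^sup>2 * mean_beta + \<epsilon> * sup_beta + 4 * \<epsilon> * sup_mean_bilin"

definition typical :: "(nat \<Rightarrow> real) \<Rightarrow> (nat \<Rightarrow> real) set" where
  "typical t = {w\<in>space (gauss n). l2norm n (bilin a n m w t) \<le> 8/5 * sup_mean_bilin \<and> beta w \<le> 8 * mean_beta}"

definition typical_shift :: "real \<Rightarrow> (nat \<Rightarrow> real) \<times> (nat \<Rightarrow> real) \<Rightarrow> (nat \<Rightarrow> real) set" where
  "typical_shift \<epsilon> p = {g\<in>space (gauss n). translate n (\<lambda>j. fst p j / \<epsilon>) g \<in> typical (snd p)}"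

lemma typical_measurable[measurable]: "typical t \<in> sets (gauss n)"
  unfolding typical_def by measurable

lemma typical_shift_measurable[measurable]: "typical_shift \<epsilon> p \<in> sets (gauss n)"
  unfolding typical_shift_def by measurable

lemma bdd_above_beta_U: "bdd_above (beta ` U)"
proof (rule bdd_aboveI2)
  define C where "C = \<bar>coeff_l1 a n m * Tb * (\<integral>g. l1norm n g \<partial>gauss n)\<bar>"
  fix x assume x: "x \<in> U"
  have "l1norm n x \<le> (\<Sum>j<n. 1)"
    unfolding l1norm_def using x U_unit_ball by (intro sum_mono unit_ball_abs_le_1) auto
  then have "C * l1norm n x \<le> C * real n"
    unfolding C_def by (intro mult_left_mono) auto
  then show "beta x \<le> C * real n"
    using beta_le_l1norm[of x] unfolding C_def by linarith
qed

lemma beta_le_sup_beta: "x \<in> U \<Longrightarrow> beta x \<le> sup_beta"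
  unfolding sup_beta_def by (rule cSUP_upper[OF _ bdd_above_beta_U])

lemma sup_beta_nonneg: "0 \<le> sup_beta"
proof -
  obtain x where "x \<in> U" using U_nonempty by auto
  then show ?thesis using beta_le_sup_beta[of x] beta_nonneg[of x] by linarith
qed

lemma mean_beta_nonneg: "0 \<le> mean_beta"
  unfolding mean_beta_def by (intro Bochner_Integration.integral_nonneg beta_nonneg)

lemma mean_bilin_le_sup: "t \<in> S \<Longrightarrow> (\<integral>g. l2norm n (bilin a n m g t) \<partial>gauss n) \<le> sup_mean_bilin"
  unfolding sup_mean_bilin_def
proof (rule cSUP_upper, assumption, rule bdd_aboveI2)
  fix t assume t: "t \<in> S"
  show "(\<integral>g. l2norm n (bilin a n m g t) \<partial>gauss n) \<le> (\<integral>g. coeff_l1 a n m * (l1norm n g * Tb) \<partial>gauss n)"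
    using l2norm_bilin_le[of m t Tb n a] S_bounded[OF t]
    by (intro integral_mono integrable_l2norm_bilin[OF t] integrable_mult_right integrable_mult_left
        integrable_l1norm_gauss) auto
qed

lemma sup_mean_bilin_nonneg: "0 \<le> sup_mean_bilin"
proof -
  obtain t where t: "t \<in> S" using S_nonempty by auto
  have "0 \<le> (\<integral>g. l2norm n (bilin a n m g t) \<partial>gauss n)"
    by (intro Bochner_Integration.integral_nonneg l2norm_nonneg)
  also have "\<dots> \<le> sup_mean_bilin" by (rule mean_bilin_le_sup[OF t])
  finally show ?thesis .
qed

lemma measure_typical_ge:
  assumes t: "t \<in> S" shows "1/4 \<le> measure (gauss n) (typical t)"
proof -
  define A where "A = {w\<in>space (gauss n). l2norm n (bilin a n m w t) > 8/5 * sup_mean_bilin}"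
  define B where "B = {w\<in>space (gauss n). beta w > 8 * mean_beta}"
  have "measure (gauss n) A \<le> 1 / (8/5)"
    unfolding A_def
    by (rule measure_gt_Markov[OF prob_space_gauss borel_measurable_l2norm_bilin integrable_l2norm_bilin[OF t]])
      (simp_all add: l2norm_nonneg mean_bilin_le_sup[OF t])
  moreover have "measure (gauss n) B \<le> 1 / 8"
    unfolding B_def
    by (rule measure_gt_Markov[OF prob_space_gauss borel_measurable_beta integrable_beta])
      (simp_all add: beta_nonneg mean_beta_def)
  moreover have "1 - measure (gauss n) A - measure (gauss n) B \<le> measure (gauss n) (typical t)"
    unfolding typical_def A_def B_def
    by (rule measure_conj_ge[OF prob_space_gauss borel_measurable_l2norm_bilin borel_measurable_beta])
  ultimately show ?thesis by simp
qed

lemma reflect_in_typical_iff: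
  assumes w: "w \<in> space (gauss n)" shows "reflect n w \<in> typical t \<longleftrightarrow> w \<in> typical t"
proof -
  have "l2norm n (bilin a n m (reflect n w) t) = l2norm n (bilin a n m w t)"
    unfolding bilin_reflect by (rule l2norm_uminus)
  moreover have "beta (reflect n w) = beta w" by (rule beta_uminus) (simp add: reflect_def)
  ultimately show ?thesis using w reflect_in_space[of n w] unfolding typical_def by simp
qed

lemma measure_typical_shift_ge:
  assumes p: "p \<in> U \<times> S" and \<epsilon>: "0 < \<epsilon>"
  shows "exp (- 1 / (2 * \<epsilon>\<^sup>2)) * (1/4) \<le> measure (gauss n) (typical_shift \<epsilon> p)"
proof -
  have "fst p \<in> unit_ball n" using p U_unit_ball by auto
  then have "(\<Sum>j<n. (fst p j / \<epsilon>)\<^sup>2) \<le> 1 / \<epsilon>\<^sup>2"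
    using \<epsilon> unfolding unit_ball_def
    by (simp add: power_divide sum_divide_distrib[symmetric] divide_right_mono)
  then have "exp (- 1 / (2 * \<epsilon>\<^sup>2)) * (1/4) \<le> exp (- (\<Sum>j<n. (fst p j / \<epsilon>)\<^sup>2) / 2) * measure (gauss n) (typical (snd p))"
    using measure_typical_ge[of "snd p"] p by (intro mult_mono) auto
  also have "\<dots> \<le> measure (gauss n) (typical_shift \<epsilon> p)"
    unfolding typical_shift_def
    by (rule measure_translate_symmetric_ge[OF typical_measurable reflect_in_typical_iff])
  finally show ?thesis .
qed

lemma l2dist_bilin_typical_shift:
  assumes \<epsilon>: "0 < \<epsilon>" and g: "g \<in> typical_shift \<epsilon> p"
  shows "l2dist n (bilin a n m (fst p) (snd p)) (\<lambda>i. - \<epsilon> * bilin a n m g (snd p) i) \<le> \<epsilon> * (8/5 * sup_mean_bilin)"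
proof -
  define w where "w = translate n (\<lambda>j. fst p j / \<epsilon>) g"
  have "(\<lambda>i. bilin a n m (fst p) (snd p) i - - \<epsilon> * bilin a n m g (snd p) i) = (\<lambda>i. \<epsilon> * bilin a n m w (snd p) i)"
    using \<epsilon> unfolding w_def by (auto simp: bilin_translate bilin_divide algebra_simps)
  then have "l2dist n (bilin a n m (fst p) (snd p)) (\<lambda>i. - \<epsilon> * bilin a n m g (snd p) i) = \<epsilon> * l2norm n (bilin a n m w (snd p))"
    using \<epsilon> by (simp add: l2norm_scale)
  also have "\<dots> \<le> \<epsilon> * (8/5 * sup_mean_bilin)"
    using g \<epsilon> unfolding typical_shift_def typical_def w_def by (intro mult_left_mono) auto
  finally show ?thesis .
qed

lemma beta_le_typical_shift:
  assumes \<epsilon>: "0 < \<epsilon>" and p: "p \<in> U \<times> S" and g: "g \<in> typical_shift \<epsilon> p"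
  shows "beta g \<le> 8 * mean_beta + (1 / \<epsilon>) * sup_beta"
proof -
  define w where "w = translate n (\<lambda>j. fst p j / \<epsilon>) g"
  have "beta g \<le> beta w + \<bar>- 1 / \<epsilon>\<bar> * beta (fst p)"
    by (rule beta_combination) (use \<epsilon> in \<open>auto simp: w_def translate_def\<close>)
  also have "\<dots> \<le> 8 * mean_beta + (1 / \<epsilon>) * sup_beta"
    using g p \<epsilon> beta_le_sup_beta[of "fst p"] unfolding typical_shift_def typical_def w_def
    by (intro add_mono mult_left_mono) (auto simp: divide_right_mono)
  finally show ?thesis .
qed

definition scaled_bilin :: "real \<Rightarrow> (nat \<Rightarrow> real) \<Rightarrow> (nat \<Rightarrow> real) \<times> (nat \<Rightarrow> real) \<Rightarrow> nat \<Rightarrow> real" where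
  "scaled_bilin \<epsilon> g p = (\<lambda>i. - \<epsilon> * bilin a n m g (snd p) i)"

text \<open>Each \<open>B(x,t)\<close> lies within \<open>8\<epsilon>M/5\<close> of \<open>-\<epsilon> B(g,t)\<close>, so the latter points keep the
  separation \<open>packing_radius \<epsilon> - 16\<epsilon>M/5\<close>, where \<open>M\<close> is \<open>sup_mean_bilin\<close>.\<close>
lemma l2dist_scaled_bilin_gt:
  assumes \<epsilon>: "0 < \<epsilon>" and sep: "packing_radius \<epsilon> < dA a n m p p'"
    and g: "g \<in> typical_shift \<epsilon> p" "g \<in> typical_shift \<epsilon> p'"
  shows "4 * \<epsilon>\<^sup>2 * mean_beta + \<epsilon> * sup_beta < l2dist n (scaled_bilin \<epsilon> g p) (scaled_bilin \<epsilon> g p')"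
proof -
  define B where "B = (\<lambda>p. bilin a n m (fst p) (snd p))"
  define v where "v = scaled_bilin \<epsilon> g"
  have near: "l2dist n (B q) (v q) \<le> \<epsilon> * (8/5 * sup_mean_bilin)" if "g \<in> typical_shift \<epsilon> q" for q
    unfolding B_def v_def scaled_bilin_def using l2dist_bilin_typical_shift[OF \<epsilon> that] .
  have "packing_radius \<epsilon> < l2dist n (B p) (B p')"
    using sep unfolding dA_eq_l2dist B_def .
  also have "\<dots> \<le> l2dist n (B p) (v p) + (l2dist n (v p) (v p') + l2dist n (v p') (B p'))"
    using l2norm_diff_triangle[of n "B p" "B p'" "v p"] l2norm_diff_triangle[of n "v p" "B p'" "v p'"] by linarith
  also have "\<dots> \<le> l2dist n (v p) (v p') + 2 * (\<epsilon> * (8/5 * sup_mean_bilin))"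
    using near[OF g(1)] near[OF g(2)] l2norm_diff_commute[of n "v p'" "B p'"] by linarith
  finally have "packing_radius \<epsilon> < l2dist n (v p) (v p') + 2 * (\<epsilon> * (8/5 * sup_mean_bilin))" .
  moreover have "packing_radius \<epsilon> = 4 * \<epsilon>\<^sup>2 * mean_beta + \<epsilon> * sup_beta + 4 * (\<epsilon> * sup_mean_bilin)"
    unfolding packing_radius_def by (simp add: algebra_simps)
  moreover have "2 * (\<epsilon> * (8/5 * sup_mean_bilin)) = 16/5 * (\<epsilon> * sup_mean_bilin)"
    by (simp add: algebra_simps)
  moreover have "0 \<le> \<epsilon> * sup_mean_bilin" using \<epsilon> sup_mean_bilin_nonneg by simp
  ultimately show ?thesis unfolding v_def by linarith
qed

lemma gauss_dominated_scaled_bilin: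
  assumes \<epsilon>: "0 < \<epsilon>" and L: "finite L" "snd ` L \<subseteq> S"
  shows "gauss_dominated n (\<lambda>z. 2 * \<epsilon> * sup_dotp g z) (scaled_bilin \<epsilon> g ` L)"
proof
  show "integrable (gauss n) (\<lambda>z. 2 * \<epsilon> * sup_dotp g z)"
    by (intro integrable_mult_right integrable_sup_dotp)
  show "2 * \<epsilon> * sup_dotp g (reflect n z) = 2 * \<epsilon> * sup_dotp g z" if "z \<in> space (gauss n)" for z
    using that by (simp add: sup_dotp_reflect_right)
  show "finite (scaled_bilin \<epsilon> g ` L)" using L by simp
  fix z u w assume "u \<in> scaled_bilin \<epsilon> g ` L" and "w \<in> scaled_bilin \<epsilon> g ` L"
  then obtain p p' where p: "p \<in> L" and p': "p' \<in> L" and uv: "u = scaled_bilin \<epsilon> g p"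
    and wv: "w = scaled_bilin \<epsilon> g p'" by auto
  have tS: "snd p \<in> S" "snd p' \<in> S" using p p' L by auto
  define A where "A = dotp n z (bilin a n m g (snd p'))"
  define B where "B = dotp n z (bilin a n m g (snd p))"
  have "dotp n z (\<lambda>i. u i - w i) = \<epsilon> * A - \<epsilon> * B"
    unfolding uv wv scaled_bilin_def A_def B_def dotp_def
    by (simp add: sum_distrib_left sum_subtractf[symmetric] algebra_simps)
  also have "\<bar>\<dots>\<bar> \<le> \<epsilon> * \<bar>A\<bar> + \<epsilon> * \<bar>B\<bar>"
    using abs_triangle_ineq4[of "\<epsilon> * A" "\<epsilon> * B"] \<epsilon> by (simp add: abs_mult)
  also have "\<dots> \<le> \<epsilon> * sup_dotp g z + \<epsilon> * sup_dotp g z"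
    unfolding A_def B_def using \<epsilon> abs_dotp_bilin_le_sup_dotp[OF tS(1)] abs_dotp_bilin_le_sup_dotp[OF tS(2)]
    by (intro add_mono mult_left_mono) auto
  finally show "\<bar>dotp n z (\<lambda>i. u i - w i)\<bar> \<le> 2 * \<epsilon> * sup_dotp g z" by simp
qed simp

text \<open>For a fixed outcome \<open>g\<close>, the pairs whose shifted event contains \<open>g\<close> give points
  \<open>-\<epsilon> B(g,t)\<close> controlled by the process \<open>z \<mapsto> 2\<epsilon> sup\<^sub>t |\<langle>z, B(g,t)\<rangle>|\<close>, whose mean
  \<open>2\<epsilon> \<beta>(g)\<close> is bounded through the typicality of \<open>g\<close>.\<close>
lemma card_typical_separated_le:
  assumes \<epsilon>: "0 < \<epsilon>" and LP: "L \<subseteq> U \<times> S" and Lfin: "finite L"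
    and sepL: "separated (dA a n m) (packing_radius \<epsilon>) L"
    and in_typical: "\<And>p. p \<in> L \<Longrightarrow> g \<in> typical_shift \<epsilon> p"
  shows "real (card L) \<le> exp (1 + 79 * (4 / \<epsilon>)\<^sup>2)"
proof (cases "L = {}")
  case True then show ?thesis by simp
next
  case False
  then obtain p0 where p0: "p0 \<in> L" by auto
  define r where "r = 4 * \<epsilon>\<^sup>2 * mean_beta + \<epsilon> * sup_beta"
  have r0: "0 \<le> r" unfolding r_def using \<epsilon> mean_beta_nonneg sup_beta_nonneg by simp
  have sep_v: "r < l2dist n (scaled_bilin \<epsilon> g p) (scaled_bilin \<epsilon> g p')"
    if "p \<in> L" "p' \<in> L" "p \<noteq> p'" for p p'
    unfolding r_def using sepL that in_typical \<epsilon> unfolding separated_def by (intro l2dist_scaled_bilin_gt) auto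
  have inj: "inj_on (scaled_bilin \<epsilon> g) L"
  proof (rule inj_onI, rule ccontr)
    fix p p' assume "p \<in> L" "p' \<in> L" "scaled_bilin \<epsilon> g p = scaled_bilin \<epsilon> g p'" "p \<noteq> p'"
    then show False using sep_v[of p p'] r0 by (simp add: l2norm_def)
  qed
  interpret D: gauss_dominated n "\<lambda>z. 2 * \<epsilon> * sup_dotp g z" "scaled_bilin \<epsilon> g ` L"
    using LP by (intro gauss_dominated_scaled_bilin[OF \<epsilon> Lfin]) auto
  have "D.Eh = 2 * \<epsilon> * beta g"
    unfolding D.Eh_def beta_eq_integral_sup_dotp by simp
  also have "\<dots> \<le> 2 * \<epsilon> * (8 * mean_beta + (1 / \<epsilon>) * sup_beta)"
    using beta_le_typical_shift[OF \<epsilon> _ in_typical[OF p0]] p0 LP \<epsilon> by (intro mult_left_mono) auto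
  also have "\<dots> \<le> (4 / \<epsilon>) * r"
    unfolding r_def using \<epsilon> sup_beta_nonneg by (simp add: field_simps power2_eq_square)
  finally have "real (card (scaled_bilin \<epsilon> g ` L)) \<le> exp (1 + 79 * (4 / \<epsilon>)\<^sup>2)"
    using sep_v r0 \<epsilon> by (intro D.card_separated_le_exp) (auto simp: separated_def)
  then show ?thesis using card_image[OF inj] by simp
qed

lemma card_separated_le_packing:
  assumes \<epsilon>: "0 < \<epsilon>" and PP: "P \<subseteq> U \<times> S" and Pfin: "finite P"
    and sepP: "separated (dA a n m) (packing_radius \<epsilon>) P"
  shows "real (card P) \<le> 4 * exp (1 / (2 * \<epsilon>\<^sup>2)) * exp (1 + 79 * (4 / \<epsilon>)\<^sup>2)"
proof -
  interpret prob_space "gauss n" by (rule prob_space_gauss)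
  define L where "L = exp (1 + 79 * (4 / \<epsilon>)\<^sup>2)"
  define E where "E = typical_shift \<epsilon>"
  have integrable_E: "integrable (gauss n) (indicator (E p) :: _ \<Rightarrow> real)" for p
    unfolding E_def by (rule integrable_real_indicator) (auto simp: emeasure_eq_measure)
  have count_le: "(\<Sum>p\<in>P. indicator (E p) g) \<le> L" for g :: "nat \<Rightarrow> real"
  proof -
    have "(\<Sum>p\<in>P. indicator (E p) g :: real) = real (card {p\<in>P. g \<in> E p})"
      using Pfin by (simp add: indicator_def sum.If_cases Int_def)
    also have "\<dots> \<le> L"
      unfolding L_def E_def using \<epsilon> PP Pfin separated_subset[OF sepP]
      by (intro card_typical_separated_le) auto
    finally show ?thesis .
  qed
  have "real (card P) * (exp (- 1 / (2 * \<epsilon>\<^sup>2)) * (1/4)) = (\<Sum>p\<in>P. exp (- 1 / (2 * \<epsilon>\<^sup>2)) * (1/4))"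
    by simp
  also have "\<dots> \<le> (\<Sum>p\<in>P. measure (gauss n) (E p))"
    unfolding E_def using PP \<epsilon> by (intro sum_mono measure_typical_shift_ge) auto
  also have "\<dots> = (\<integral>g. (\<Sum>p\<in>P. indicator (E p) g) \<partial>gauss n)"
    using integrable_E by (simp add: Bochner_Integration.integral_sum E_def Int_absorb2 sets.sets_into_space)
  also have "\<dots> \<le> (\<integral>g. L \<partial>gauss n)"
    using integrable_E count_le by (intro integral_mono Bochner_Integration.integrable_sum) auto
  also have "\<dots> = L" by (simp add: prob_space)
  finally have "real (card P) * (exp (- 1 / (2 * \<epsilon>\<^sup>2)) * (1/4)) \<le> L" .
  then show ?thesis unfolding L_def by (simp add: exp_minus field_simps)
qed

lemma card_separated_le_1_large_eps:
  assumes \<epsilon>: "12 \<le> \<epsilon>" and PP: "P \<subseteq> U \<times> S" and Pfin: "finite P"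
    and sepP: "separated (dA a n m) (packing_radius \<epsilon>) P"
  shows "card P \<le> 1"
proof (rule card_le_1_if_separated_diameter[OF Pfin sepP])
  fix p p' assume p: "p \<in> P" and p': "p' \<in> P"
  have U: "fst p \<in> U" "fst p' \<in> U" and S: "snd p \<in> S" "snd p' \<in> S" using p p' PP by auto
  have "dA a n m p p' \<le> l2norm n (bilin a n m (fst p) (snd p)) + l2norm n (\<lambda>i. - bilin a n m (fst p') (snd p') i)"
    unfolding dA_eq_l2dist
    using l2norm_triangle[of n "bilin a n m (fst p) (snd p)" "\<lambda>i. - bilin a n m (fst p') (snd p') i"] by simp
  also have "\<dots> \<le> 6 * beta (fst p) + 6 * beta (fst p')"
    unfolding l2norm_uminus using S by (intro add_mono l2norm_bilin_le_beta)
  also have "\<dots> \<le> 12 * sup_beta" using beta_le_sup_beta[OF U(1)] beta_le_sup_beta[OF U(2)] by linarith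
  also have "\<dots> \<le> \<epsilon> * sup_beta"
    using \<epsilon> sup_beta_nonneg by (intro mult_right_mono) auto
  also have "\<dots> \<le> packing_radius \<epsilon>"
    unfolding packing_radius_def using \<epsilon> mean_beta_nonneg sup_mean_bilin_nonneg by simp
  finally show "dA a n m p p' \<le> packing_radius \<epsilon>" .
qed

theorem card_separated_le_exp_inverse_square:
  assumes \<epsilon>: "0 < \<epsilon>" and PP: "P \<subseteq> U \<times> S" and Pfin: "finite P"
    and sepP: "separated (dA a n m) (packing_radius \<epsilon>) P"
  shows "real (card P) \<le> exp (1700 / \<epsilon>\<^sup>2)"
proof (cases "12 \<le> \<epsilon>")
  case True
  then have "card P \<le> 1" using card_separated_le_1_large_eps PP Pfin sepP by blast
  then show ?thesis using \<epsilon> by (simp add: order_trans[of _ 1])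
next
  case False
  have "real (card P) \<le> 4 * exp (1 / (2 * \<epsilon>\<^sup>2)) * exp (1 + 79 * (4 / \<epsilon>)\<^sup>2)"
    by (rule card_separated_le_packing[OF \<epsilon> PP Pfin sepP])
  also have "\<dots> \<le> exp 2 * exp (1 / (2 * \<epsilon>\<^sup>2)) * exp (1 + 79 * (4 / \<epsilon>)\<^sup>2)"
  proof -
    have "2 \<le> exp (1::real)" using exp_ge_add_one_self[of 1] by simp
    then have "2 * 2 \<le> exp (1::real) * exp 1" by (intro mult_mono) auto
    then have "4 \<le> exp (2::real)" by (simp add: exp_add[symmetric])
    then show ?thesis by (intro mult_right_mono) auto
  qed
  also have "\<dots> = exp (3 + (1/2 + 1264) / \<epsilon>\<^sup>2)"
    using \<epsilon> by (simp add: exp_add[symmetric] power_divide field_simps)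
  also have "\<dots> \<le> exp (1700 / \<epsilon>\<^sup>2)"
  proof -
    have "\<epsilon>\<^sup>2 \<le> 144" using power_mono[of \<epsilon> 12 2] False \<epsilon> by simp
    then have "3 \<le> 432 / \<epsilon>\<^sup>2" using \<epsilon> by (simp add: field_simps)
    then show ?thesis by (simp add: add_divide_distrib[symmetric] divide_right_mono)
  qed
  finally show ?thesis .
qed

section \<open>Covering numbers of U \<times> S\<close>

lemma covering_number_le_exp_inverse_square:
  assumes \<epsilon>: "0 < \<epsilon>" and \<delta>: "2 * packing_radius \<epsilon> \<le> \<delta>"
  shows "covering_number (U \<times> S) (dA a n m) \<delta> \<noteq> \<infinity>
    \<and> real (the_enat (covering_number (U \<times> S) (dA a n m) \<delta>)) \<le> exp (1700 / \<epsilon>\<^sup>2)"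
proof (rule covering_number_le_if_separated_bound[OF dA_commute dA_self])
  have "0 \<le> packing_radius \<epsilon>"
    unfolding packing_radius_def using \<epsilon> mean_beta_nonneg sup_beta_nonneg sup_mean_bilin_nonneg by simp
  then show "0 \<le> \<delta>" using \<delta> by simp
  fix P assume "P \<subseteq> U \<times> S" "finite P" "separated (dA a n m) (\<delta> / 2) P"
  moreover have "separated (dA a n m) (packing_radius \<epsilon>) P"
    using \<open>separated (dA a n m) (\<delta> / 2) P\<close> \<delta> unfolding separated_def by force
  ultimately show "real (card P) \<le> exp (1700 / \<epsilon>\<^sup>2)"
    using card_separated_le_exp_inverse_square[OF \<epsilon>] by blast
qed

lemma covering_number_le_1_if_degenerate:
  assumes "sup_beta + sup_mean_bilin = 0" "mean_beta = 0" and \<delta>: "0 < \<delta>"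
  shows "covering_number (U \<times> S) (dA a n m) \<delta> \<noteq> \<infinity>
    \<and> real (the_enat (covering_number (U \<times> S) (dA a n m) \<delta>)) = 1"
proof -
  have "packing_radius 12 = 0"
    using assms sup_beta_nonneg sup_mean_bilin_nonneg unfolding packing_radius_def by simp
  have "covering_number (U \<times> S) (dA a n m) \<delta> \<noteq> \<infinity>
    \<and> real (the_enat (covering_number (U \<times> S) (dA a n m) \<delta>)) \<le> 1"
  proof (rule covering_number_le_if_separated_bound[OF dA_commute dA_self])
    fix P assume P: "P \<subseteq> U \<times> S" "finite P" "separated (dA a n m) (\<delta> / 2) P"
    then have "separated (dA a n m) (packing_radius 12) P"
      using \<delta> \<open>packing_radius 12 = 0\<close> unfolding separated_def by force
    then show "real (card P) \<le> 1" using card_separated_le_1_large_eps[of 12] P by simp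
  qed (use \<delta> in simp)
  then show ?thesis
    using one_le_covering_number[of "U \<times> S"] U_nonempty S_nonempty by fastforce
qed

lemma sqrt_ln_le_of_le_exp:
  fixes N q :: real
  assumes "1 \<le> N" "N \<le> exp (1700 * q\<^sup>2)" "0 \<le> q"
  shows "sqrt (ln N) \<le> 42 * q"
proof -
  have "ln N \<le> ln (exp (1700 * q\<^sup>2))" using assms by (subst ln_le_cancel_iff) auto
  then have "sqrt (ln N) \<le> sqrt (1700 * q\<^sup>2)" by simp
  also have "\<dots> = sqrt 1700 * q" using assms(3) by (simp add: real_sqrt_mult)
  also have "\<dots> \<le> 42 * q" using assms(3) real_sqrt_le_iff[of 1700 "42\<^sup>2"] by (intro mult_right_mono) auto
  finally show ?thesis .
qed

lemma two_packing_radius_le: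
  assumes \<delta>: "0 < \<delta>" and q: "0 < q" and qX: "16 * (sup_beta + sup_mean_bilin) / \<delta> \<le> q"
    and qY: "16 * mean_beta / \<delta> \<le> q\<^sup>2"
  shows "2 * packing_radius (1 / q) \<le> \<delta>"
proof -
  define e where "e = 1 / q"
  have "2 * packing_radius e = 8 * (e\<^sup>2 * mean_beta) + 2 * (e * sup_beta) + 8 * (e * sup_mean_bilin)"
    unfolding packing_radius_def by (simp add: algebra_simps)
  moreover have "8 * (e\<^sup>2 * mean_beta) \<le> \<delta> / 2"
    using qY \<delta> q unfolding e_def by (simp add: field_simps power2_eq_square)
  moreover have "8 * (e * sup_beta) + 8 * (e * sup_mean_bilin) \<le> \<delta> / 2"
    using qX \<delta> q unfolding e_def by (simp add: field_simps)
  moreover have "0 \<le> e * sup_beta" using q sup_beta_nonneg unfolding e_def by simp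
  ultimately show ?thesis unfolding e_def by linarith
qed

theorem sqrt_ln_covering_number_le:
  assumes \<delta>: "0 < \<delta>"
  shows "covering_number (U \<times> S) (dA a n m) \<delta> \<noteq> \<infinity>
    \<and> sqrt (ln (real (the_enat (covering_number (U \<times> S) (dA a n m) \<delta>))))
      \<le> 1700 * ((1 / \<delta>) * (sup_beta + sup_mean_bilin) + (1 / sqrt \<delta>) * sqrt mean_beta)"
proof -
  define X where "X = sup_beta + sup_mean_bilin"
  define Y where "Y = mean_beta"
  have X0: "0 \<le> X" and Y0: "0 \<le> Y"
    unfolding X_def Y_def using sup_beta_nonneg sup_mean_bilin_nonneg mean_beta_nonneg by auto
  have rhs0: "0 \<le> 1700 * ((1 / \<delta>) * X + (1 / sqrt \<delta>) * sqrt Y)" using \<delta> X0 Y0 by simp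
  show ?thesis
  proof (cases "X = 0 \<and> Y = 0")
    case True
    then show ?thesis using covering_number_le_1_if_degenerate[OF _ _ \<delta>] rhs0 unfolding X_def Y_def by simp
  next
    case False
    define q where "q = max (16 * X / \<delta>) (sqrt (16 * Y / \<delta>))"
    have q: "0 < q" using False X0 Y0 \<delta> unfolding q_def by (auto simp: less_max_iff_disj)
    have qX: "16 * X / \<delta> \<le> q" unfolding q_def by simp
    have qY: "16 * Y / \<delta> \<le> q\<^sup>2"
      using real_sqrt_le_iff[of "16 * Y / \<delta>" "q\<^sup>2"] q unfolding q_def by fastforce
    have cov: "covering_number (U \<times> S) (dA a n m) \<delta> \<noteq> \<infinity>
      \<and> real (the_enat (covering_number (U \<times> S) (dA a n m) \<delta>)) \<le> exp (1700 * q\<^sup>2)"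
      using covering_number_le_exp_inverse_square[of "1 / q" \<delta>]
        two_packing_radius_le[OF \<delta> q qX[unfolded X_def] qY[unfolded Y_def]] q
      by (simp add: power_divide)
    define N where "N = real (the_enat (covering_number (U \<times> S) (dA a n m) \<delta>))"
    have "1 \<le> N" unfolding N_def using one_le_covering_number[of "U \<times> S"] U_nonempty S_nonempty cov by simp
    then have "sqrt (ln N) \<le> 42 * q"
      using cov q unfolding N_def by (intro sqrt_ln_le_of_le_exp) auto
    also have "\<dots> \<le> 42 * (16 * X / \<delta> + 4 * (sqrt Y / sqrt \<delta>))"
    proof -
      have "sqrt (16 * Y / \<delta>) = 4 * (sqrt Y / sqrt \<delta>)"
        by (simp add: real_sqrt_mult real_sqrt_divide)
      then have "q \<le> 16 * X / \<delta> + 4 * (sqrt Y / sqrt \<delta>)"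
        unfolding q_def using X0 Y0 \<delta> by (auto simp: max_def)
      then show ?thesis by simp
    qed
    also have "\<dots> \<le> 1700 * ((1 / \<delta>) * X + (1 / sqrt \<delta>) * sqrt Y)"
      using X0 Y0 \<delta> by (simp add: field_simps)
    finally show ?thesis using cov unfolding N_def X_def Y_def by simp
  qed
qed

end

lemma abs_le_1_plus_square: "\<bar>x :: real\<bar> \<le> 1 + x\<^sup>2"
  using zero_le_power2[of "\<bar>x\<bar> - 1"] by (simp add: power2_eq_square algebra_simps abs_mult_self_eq)

lemma bounded_in_coordinate_bound:
  assumes "bounded_in m S" obtains Tb where "\<And>t k. t \<in> S \<Longrightarrow> k < m \<Longrightarrow> \<bar>t k\<bar> \<le> Tb"
proof -
  obtain R where R: "\<And>t. t \<in> S \<Longrightarrow> (\<Sum>k<m. (t k)\<^sup>2) \<le> R" using assms unfolding bounded_in_def by auto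
  have "\<bar>t k\<bar> \<le> 1 + R" if "t \<in> S" "k < m" for t k
    using abs_le_1_plus_square[of "t k"] member_le_sum[of k "{..<m}" "\<lambda>k. (t k)\<^sup>2"] R[of t] that by auto
  then show ?thesis using that by blast
qed

theorem corollary5p3:
  "\<exists>C::real. \<forall>(n::nat) (m::nat) (a::nat \<Rightarrow> nat \<Rightarrow> nat \<Rightarrow> real) U S.
     U \<noteq> {} \<longrightarrow> U \<subseteq> unit_ball n \<longrightarrow> S \<noteq> {} \<longrightarrow> bounded_in m S \<longrightarrow>
     (\<forall>\<epsilon>>0.
        covering_number (U \<times> S) (dA a n m)
          (8 * \<epsilon>\<^sup>2 * (\<integral>g. betaAS a n m S g \<partial>gauss n)
           + 2 * \<epsilon> * (SUP x\<in>U. betaAS a n m S x)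
           + 8 * \<epsilon> * (SUP t\<in>S. \<integral>g. alphaA a n m (tensor g t) \<partial>gauss n)) \<noteq> \<infinity>
      \<and> real (the_enat (covering_number (U \<times> S) (dA a n m)
          (8 * \<epsilon>\<^sup>2 * (\<integral>g. betaAS a n m S g \<partial>gauss n)
           + 2 * \<epsilon> * (SUP x\<in>U. betaAS a n m S x)
           + 8 * \<epsilon> * (SUP t\<in>S. \<integral>g. alphaA a n m (tensor g t) \<partial>gauss n))))
         \<le> exp (C / \<epsilon>\<^sup>2)) \<and>
     (\<forall>\<delta>>0.
        covering_number (U \<times> S) (dA a n m) \<delta> \<noteq> \<infinity>
      \<and> sqrt (ln (real (the_enat (covering_number (U \<times> S) (dA a n m) \<delta>))))
         \<le> C * ((1 / \<delta>) * ((SUP x\<in>U. betaAS a n m S x)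
                              + (SUP t\<in>S. \<integral>g. alphaA a n m (tensor g t) \<partial>gauss n))
                + (1 / sqrt \<delta>) * sqrt (\<integral>g. betaAS a n m S g \<partial>gauss n)))"
  apply (intro exI[of _ 1700] allI impI)
  subgoal premises prems for n m a U S
  proof -
    obtain Tb where "\<And>t k. t \<in> S \<Longrightarrow> k < m \<Longrightarrow> \<bar>t k\<bar> \<le> Tb"
      using bounded_in_coordinate_bound[OF prems(4)] by blast
    then interpret packing_setting a n m S Tb U
      using prems by unfold_locales auto
    have "(\<integral>g. betaAS a n m S g \<partial>gauss n) = mean_beta" "(SUP x\<in>U. betaAS a n m S x) = sup_beta"
      "(SUP t\<in>S. \<integral>g. alphaA a n m (tensor g t) \<partial>gauss n) = sup_mean_bilin"
      by (simp_all add: mean_beta_def sup_beta_def sup_mean_bilin_def alphaA_tensor)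
    moreover have "8 * \<epsilon>\<^sup>2 * mean_beta + 2 * \<epsilon> * sup_beta + 8 * \<epsilon> * sup_mean_bilin = 2 * packing_radius \<epsilon>" for \<epsilon>
      unfolding packing_radius_def by (simp add: algebra_simps)
    ultimately show ?thesis
      using covering_number_le_exp_inverse_square sqrt_ln_covering_number_le by simp
  qed
  done

end
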